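(* Let $\Sigma$ be a finite alphabet whose characters can be compared in constant time. There is an online streaming algorithm that, given a string $w \in \Sigma^*$ of length $n$, decides whether $w \in L_{\mathrm{UNIQ}}$ (i.e. whether $w$ is uniquely decodable from its bigrams) in time $\Theta(n)$ and space $O(|\Sigma|)$.
   Context: Let $\$ \notin \Sigma$ be a delimiter symbol and $\Sigma_\$ = \Sigma \cup \{\$\}$. For a string $x \in \$\Sigma^*\$$, its bigram vector $\Phi(x) \in \mathbb{N}^{\Sigma_\$^2}$ records, for each pair $(c,d) \in \Sigma_\$^2$, the number of indices $j$ with $x[j]x[j+1] = cd$ (occurrences as a contiguous substring, counting overlaps). A string $w \in \Sigma^*$ is uniquely decodable, written $w \in L_{\mathrm{UNIQ}}$, if the only string $x \in \$\Sigma^*\$$ with $\Phi(x) = \Phi(\$w\$)$ is $x = \$w\$$. *)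

theory Defs
  imports Main
begin

text \<open>Strings over the extended alphabet are lists over 'a option; None plays the
  role of the delimiter symbol.\<close>

definition bigram :: "'b list \<Rightarrow> 'b \<times> 'b \<Rightarrow> nat" where
  "bigram x = (\<lambda>(c, d). card {j. Suc j < length x \<and> x ! j = c \<and> x ! Suc j = d})"

definition delim :: "'a list \<Rightarrow> 'a option list" where
  "delim w = None # map Some w @ [None]"

definition uniq_dec :: "'a set \<Rightarrow> 'a list \<Rightarrow> bool" where
  "uniq_dec \<Sigma> w \<longleftrightarrow>
     (\<forall>x. set x \<subseteq> \<Sigma> \<and> bigram (delim x) = bigram (delim w) \<longrightarrow> x = w)"

datatype instr = LoadC nat nat | Add nat nat nat | Sub nat nat nat
  | LoadI nat nat | StoreI nat nat | Jz nat nat | Jmp nat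

type_synonym config = "nat \<times> (nat \<Rightarrow> nat)"

fun exec_instr :: "instr \<Rightarrow> config \<Rightarrow> config" where
  "exec_instr (LoadC r v) (pc, m) = (Suc pc, m(r := v))"
| "exec_instr (Add r a b) (pc, m) = (Suc pc, m(r := m a + m b))"
| "exec_instr (Sub r a b) (pc, m) = (Suc pc, m(r := m a - m b))"
| "exec_instr (LoadI r a) (pc, m) = (Suc pc, m(r := m (m a)))"
| "exec_instr (StoreI a r) (pc, m) = (Suc pc, m(m a := m r))"
| "exec_instr (Jz r l) (pc, m) = (if m r = 0 then l else Suc pc, m)"
| "exec_instr (Jmp l) (pc, m) = (l, m)"

fun touched :: "instr \<Rightarrow> (nat \<Rightarrow> nat) \<Rightarrow> nat set" where
  "touched (LoadC r v) m = {r}"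
| "touched (Add r a b) m = {r, a, b}"
| "touched (Sub r a b) m = {r, a, b}"
| "touched (LoadI r a) m = {r, a, m a}"
| "touched (StoreI a r) m = {a, r, m a}"
| "touched (Jz r l) m = {r}"
| "touched (Jmp l) m = {}"

definition step :: "instr list \<Rightarrow> config \<Rightarrow> config" where
  "step P cfg = (if fst cfg < length P then exec_instr (P ! fst cfg) cfg else cfg)"

definition cfg_at :: "instr list \<Rightarrow> (nat \<Rightarrow> nat) \<Rightarrow> nat \<Rightarrow> config" where
  "cfg_at P m i = (step P ^^ i) (0, m)"

definition halts_in :: "instr list \<Rightarrow> (nat \<Rightarrow> nat) \<Rightarrow> nat \<Rightarrow> bool" where
  "halts_in P m t \<longleftrightarrow> length P \<le> fst (cfg_at P m t) \<and> (\<forall>i<t. fst (cfg_at P m i) < length P)"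

text \<open>Resource constraints during the first t steps: only addresses below S are
  accessed, and every memory cell holds a value at most V (word-size bound).\<close>
definition within :: "instr list \<Rightarrow> nat \<Rightarrow> nat \<Rightarrow> (nat \<Rightarrow> nat) \<Rightarrow> nat \<Rightarrow> bool" where
  "within P S V m t \<longleftrightarrow>
     (\<forall>i<t. touched (P ! fst (cfg_at P m i)) (snd (cfg_at P m i)) \<subseteq> {..<S}) \<and>
     (\<forall>i\<le>t. \<forall>a. snd (cfg_at P m i) a \<le> V)"

definition run :: "instr list \<Rightarrow> nat \<Rightarrow> nat \<Rightarrow> (nat \<Rightarrow> nat) \<Rightarrow> (nat \<times> (nat \<Rightarrow> nat)) option" where
  "run P S V m = (if \<exists>t. halts_in P m t \<and> within P S V m t
     then (let t = (THE t. halts_in P m t) in Some (t, snd (cfg_at P m t))) else None)"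

text \<open>Single left-to-right pass: for each input character c, put c into register 0
  and run the step program (reading a character costs one time unit).\<close>
fun stream :: "instr list \<Rightarrow> nat \<Rightarrow> nat \<Rightarrow> (nat \<Rightarrow> nat) \<Rightarrow> nat list
                 \<Rightarrow> (nat \<times> (nat \<Rightarrow> nat)) option" where
  "stream P S V m [] = Some (0, m)"
| "stream P S V m (c # cs) =
     (case run P S V (m(0 := c)) of
        None \<Rightarrow> None
      | Some (t, m') \<Rightarrow> map_option (\<lambda>(t', m''). (Suc t + t', m'')) (stream P S V m' cs))"

text \<open>The answer is
  "accept" iff register 0 is nonzero at the end.\<close>
definition stream_alg :: "instr list \<Rightarrow> instr list \<Rightarrow> nat \<Rightarrow> nat \<Rightarrow> nat \<Rightarrow> nat list
                 \<Rightarrow> (nat \<times> (nat \<Rightarrow> nat)) option" where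
  "stream_alg Pstep Pfin S V k w =
     (case stream Pstep S V ((\<lambda>_. 0)(1 := k)) w of
        None \<Rightarrow> None
      | Some (t, m) \<Rightarrow> map_option (\<lambda>(t', m'). (t + t', m')) (run Pfin S V m))"

end

theory Submission
  imports Defs "HOL-Library.Multiset"
begin

text \<open>
  A word \<open>w\<close> fails to be uniquely decodable from its bigrams exactly when it is ambiguous: there
  are positions \<open>a < c < j\<close> with \<open>w[a] = w[c]\<close>, \<open>w[a+1] \<noteq> w[c+1]\<close>, and a letter of the factor
  \<open>w[a..c]\<close> recurs at \<open>j\<close>. Then exchanging the factors cut out at these positions changes \<open>w\<close> but
  none of its bigrams. Conversely, where a bigram twin of \<open>w\<close> first deviates from \<open>w\<close>, the twin's
  bigrams can only be followed through \<open>w\<close> if such a configuration exists.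

  Online, \<open>w u\<close> is ambiguous iff the previous occurrence of \<open>u\<close> is covered, i.e. lies in some
  interval \<open>(a, c+1]\<close> with \<open>w[a] = w[c]\<close> and \<open>w[a+1] \<noteq> w[c+1]\<close>; for unambiguous \<open>w\<close> one may take
  \<open>a\<close> to be the first occurrence of its letter. The covered positions form a stack of disjoint
  sorted intervals, and a new interval pops and absorbs the intervals it meets. An uncovered
  position stays in the gap above the stack entry current when it was recorded, so remembering
  that stack height per letter makes coveredness a constant-time test. Every stack entry ends at
  the last occurrence of a distinct letter, so the stack and all tables have size \<open>O(|\<Sigma>|)\<close>, and
  each pop is paid for by the stack height, giving amortised constant time per letter.
\<close>

section \<open>Bigram multisets\<close>

fun bigrams :: "'a list \<Rightarrow> ('a \<times> 'a) multiset" where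
  "bigrams (a # b # r) = add_mset (a, b) (bigrams (b # r))"
| "bigrams _ = {#}"

lemma bigrams_zip: "bigrams xs = mset (zip xs (tl xs))"
  by (induction xs rule: bigrams.induct) auto

lemma bigram_eq_count_bigrams: "bigram x (c, d) = count (bigrams x) (c, d)"
proof -
  have "count (bigrams x) (c, d) = length (filter ((=) (c, d)) (zip x (tl x)))"
    unfolding bigrams_zip by (simp add: count_mset count_list_eq_length_filter)
  also have "\<dots> = card {i. i < length (zip x (tl x)) \<and> (c, d) = zip x (tl x) ! i}"
    by (rule length_filter_conv_card)
  also have "{i. i < length (zip x (tl x)) \<and> (c, d) = zip x (tl x) ! i} = {j. Suc j < length x \<and> x ! j = c \<and> x ! Suc j = d}"
    by (auto simp: nth_tl)
  finally show ?thesis unfolding bigram_def by simp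
qed

lemma bigram_eq_iff_bigrams_eq: "bigram x = bigram y \<longleftrightarrow> bigrams x = bigrams y"
proof
  assume "bigram x = bigram y"
  then show "bigrams x = bigrams y" by (metis bigram_eq_count_bigrams multiset_eqI surj_pair)
next
  assume "bigrams x = bigrams y"
  then show "bigram x = bigram y" by (intro ext) (metis bigram_eq_count_bigrams surj_pair)
qed

lemma bigrams_split: "bigrams (xs @ y # ys) = bigrams (xs @ [y]) + bigrams (y # ys)"
proof (induction xs rule: bigrams.induct)
  case (1 a b r)
  then show ?case by simp
next
  case ("2_1") then show ?case by simp
next
  case ("2_2" a) then show ?case by (cases ys) auto
qed

lemma bigrams_glue: "xs \<noteq> [] \<Longrightarrow> ys \<noteq> [] \<Longrightarrow> last xs = hd ys \<Longrightarrow> bigrams (xs @ tl ys) = bigrams xs + bigrams ys"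
proof -
  assume a: "xs \<noteq> []" "ys \<noteq> []" "last xs = hd ys"
  obtain y ys' where ys: "ys = y # ys'" using a(2) by (cases ys) auto
  obtain xs0 where xs: "xs = xs0 @ [y]" using a(1,3) ys by (metis append_butlast_last_id list.sel(1))
  show ?thesis unfolding xs ys using bigrams_split[of xs0 y ys'] by simp
qed

lemma size_bigrams: "size (bigrams xs) = length xs - 1"
  by (induction xs rule: bigrams.induct) auto

lemma bigrams_map: "bigrams (map f xs) = image_mset (map_prod f f) (bigrams xs)"
  by (induction xs rule: bigrams.induct) auto

lemma mem_bigrams_iff: "(c, d) \<in># bigrams xs \<longleftrightarrow> (\<exists>r. Suc r < length xs \<and> xs ! r = c \<and> xs ! Suc r = d)"
proof -
  have "(c, d) \<in># bigrams xs \<longleftrightarrow> (\<exists>i < length (zip xs (tl xs)). zip xs (tl xs) ! i = (c, d))"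
    unfolding bigrams_zip in_multiset_in_set by (auto simp: in_set_conv_nth)
  also have "\<dots> \<longleftrightarrow> (\<exists>r. Suc r < length xs \<and> xs ! r = c \<and> xs ! Suc r = d)"
  proof
    assume "\<exists>i < length (zip xs (tl xs)). zip xs (tl xs) ! i = (c, d)"
    then obtain i where "i < length (zip xs (tl xs))" "zip xs (tl xs) ! i = (c, d)" by blast
    then show "\<exists>r. Suc r < length xs \<and> xs ! r = c \<and> xs ! Suc r = d"
      by (intro exI[of _ i]) (auto simp: nth_tl)
  next
    assume "\<exists>r. Suc r < length xs \<and> xs ! r = c \<and> xs ! Suc r = d"
    then obtain r where "Suc r < length xs" "xs ! r = c" "xs ! Suc r = d" by blast
    then show "\<exists>i < length (zip xs (tl xs)). zip xs (tl xs) ! i = (c, d)"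
      by (intro exI[of _ r]) (auto simp: nth_tl)
  qed
  finally show ?thesis .
qed

lemma bigrams_snoc: "bigrams (xs @ [z]) = bigrams xs + (if xs = [] then {#} else {#(last xs, z)#})"
proof (cases "xs = []")
  case False
  then obtain xs0 x where xs: "xs = xs0 @ [x]" by (metis append_butlast_last_id)
  show ?thesis using bigrams_split[of xs0 x "[z]"] xs by simp
qed simp

lemma bigrams_delim: "w \<noteq> [] \<Longrightarrow> bigrams (delim w) = add_mset (None, Some (hd w)) (add_mset (Some (last w), None) (image_mset (map_prod Some Some) (bigrams w)))"
proof -
  assume ne: "w \<noteq> []"
  obtain x w' where w: "w = x # w'" using ne by (cases w) auto
  have "bigrams (delim w) = add_mset (None, Some x) (bigrams (map Some w @ [None]))"
    unfolding delim_def w by simp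
  also have "bigrams (map Some w @ [None]) = bigrams (map Some w) + {#(Some (last w), None)#}"
    using bigrams_snoc[of "map Some w" None] ne by (simp add: last_map)
  finally show ?thesis using w bigrams_map[of Some w] by simp
qed

definition slice :: "'a list \<Rightarrow> nat \<Rightarrow> nat \<Rightarrow> 'a list" where
  "slice w lo hi = take (Suc hi - lo) (drop lo w)"

lemma slice_len: "lo \<le> hi \<Longrightarrow> hi < length w \<Longrightarrow> length (slice w lo hi) = Suc hi - lo"
  unfolding slice_def by simp

lemma slice_nth: "lo \<le> hi \<Longrightarrow> hi < length w \<Longrightarrow> i < Suc hi - lo \<Longrightarrow> slice w lo hi ! i = w ! (lo + i)"
  unfolding slice_def by simp

lemma slice_ne: "lo \<le> hi \<Longrightarrow> hi < length w \<Longrightarrow> slice w lo hi \<noteq> []"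
  using slice_len[of lo hi w] by auto

lemma slice_hd: "lo \<le> hi \<Longrightarrow> hi < length w \<Longrightarrow> hd (slice w lo hi) = w ! lo"
  using slice_nth[of lo hi w 0] slice_ne[of lo hi w] by (simp add: hd_conv_nth)

lemma slice_last: "lo \<le> hi \<Longrightarrow> hi < length w \<Longrightarrow> last (slice w lo hi) = w ! hi"
  using slice_nth[of lo hi w "hi - lo"] slice_ne[of lo hi w] slice_len[of lo hi w] by (simp add: last_conv_nth)

lemma slice_set: "set (slice w lo hi) \<subseteq> set w"
  unfolding slice_def by (meson order.trans set_drop_subset set_take_subset)

lemma slice_glue:
  assumes "lo \<le> mid" "mid \<le> hi" "hi < length w"
  shows "slice w lo mid @ tl (slice w mid hi) = slice w lo hi"
proof (rule nth_equalityI)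
  show "length (slice w lo mid @ tl (slice w mid hi)) = length (slice w lo hi)"
    using assms slice_len[of lo mid w] slice_len[of mid hi w] slice_len[of lo hi w] by simp
next
  fix i assume i: "i < length (slice w lo mid @ tl (slice w mid hi))"
  then have i2: "i < Suc hi - lo"
    using assms slice_len[of lo mid w] slice_len[of mid hi w] by simp
  show "(slice w lo mid @ tl (slice w mid hi)) ! i = slice w lo hi ! i"
  proof (cases "i < Suc mid - lo")
    case True
    then show ?thesis using assms slice_len[of lo mid w] slice_nth[of lo mid w i] slice_nth[of lo hi w i] i2
      by (simp add: nth_append)
  next
    case False
    have "tl (slice w mid hi) ! (i - (Suc mid - lo)) = slice w mid hi ! Suc (i - (Suc mid - lo))"
      using assms slice_len[of mid hi w] i2 False by (simp add: nth_tl)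
    also have "\<dots> = w ! (mid + Suc (i - (Suc mid - lo)))"
      by (rule slice_nth) (use assms i2 False in auto)
    also have "mid + Suc (i - (Suc mid - lo)) = lo + i" using assms False by simp
    finally have e: "tl (slice w mid hi) ! (i - (Suc mid - lo)) = w ! (lo + i)" .
    show ?thesis using assms slice_len[of lo mid w] slice_nth[of lo hi w i] i2 False e
      by (simp add: nth_append)
  qed
qed

lemma slice_all: "w \<noteq> [] \<Longrightarrow> slice w 0 (length w - 1) = w"
  unfolding slice_def by simp

lemma last_glue: "xs \<noteq> [] \<Longrightarrow> ys \<noteq> [] \<Longrightarrow> last xs = hd ys \<Longrightarrow> last (xs @ tl ys) = last ys"
  by (cases ys) (auto simp: last_append)

lemma bigrams_slice_split: "lo \<le> mid \<Longrightarrow> mid \<le> hi \<Longrightarrow> hi < length w \<Longrightarrow> bigrams (slice w lo hi) = bigrams (slice w lo mid) + bigrams (slice w mid hi)"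
  using bigrams_glue[of "slice w lo mid" "slice w mid hi"] slice_glue[of lo mid hi w] slice_ne[of lo mid w] slice_ne[of mid hi w]
    slice_last[of lo mid w] slice_hd[of mid hi w] by simp

section \<open>Ambiguity characterises non-unique decodability\<close>

definition ambiguous :: "'a list \<Rightarrow> bool" where
  "ambiguous w \<longleftrightarrow> (\<exists>a c i j. a < c \<and> c < j \<and> j < length w \<and> w ! a = w ! c \<and> w ! Suc a \<noteq> w ! Suc c \<and>
     a \<le> i \<and> i \<le> c \<and> w ! i = w ! j)"

text \<open>For \<open>a \<le> i \<le> c \<le> j\<close>, the word \<open>w[..a] w(a..i] w(i..c] w(c..j] w(j..]\<close> is rearranged into
  \<open>w[..a] w(c..j] w(i..c] w(a..i] w(j..]\<close>; \<open>w ! a = w ! c\<close> and \<open>w ! i = w ! j\<close> make every junction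
  reproduce a bigram of \<open>w\<close>.\<close>

definition swap_factors :: "'a list \<Rightarrow> nat \<Rightarrow> nat \<Rightarrow> nat \<Rightarrow> nat \<Rightarrow> 'a list" where
  "swap_factors w a i c j = slice w 0 a @ tl (slice w c j) @ tl (slice w i c) @ tl (slice w a i)
     @ tl (slice w j (length w - 1))"

lemma set_swap_factors: "set (swap_factors w a i c j) \<subseteq> set w"
proof -
  have "set (tl (slice w lo hi)) \<subseteq> set w" for lo hi
    using slice_set[of w lo hi] by (cases "slice w lo hi") auto
  then show ?thesis unfolding swap_factors_def using slice_set[of w 0 a] by auto
qed

lemma swap_factors_nth_Suc:
  assumes "a < c" "c < j" "j < length w"
  shows "swap_factors w a i c j ! Suc a = w ! Suc c"
proof -
  have "swap_factors w a i c j ! Suc a = tl (slice w c j) ! 0"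
    unfolding swap_factors_def using slice_len[of 0 a w] slice_len[of c j w] assms by (simp add: nth_append)
  also have "\<dots> = slice w c j ! 1" using slice_len[of c j w] assms by (simp add: nth_tl)
  also have "\<dots> = w ! Suc c" using slice_nth[of c j w 1] assms by simp
  finally show ?thesis .
qed

lemma bigrams_delim_swap_factors:
  assumes h: "a \<le> i" "i \<le> c" "c \<le> j" "j < length w" "w ! a = w ! c" "w ! i = w ! j"
  shows "bigrams (delim (swap_factors w a i c j)) = bigrams (delim w)"
proof -
  define n where "n = length w"
  have ne: "w \<noteq> []" using h by auto
  have jn: "j \<le> n - 1" and nn: "n - 1 < length w" using h ne n_def by auto
  define G1 where "G1 = slice w 0 a @ tl (slice w c j)"
  define G2 where "G2 = G1 @ tl (slice w i c)"
  define G3 where "G3 = G2 @ tl (slice w a i)"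
  define y where "y = G3 @ tl (slice w j (n - 1))"
  have y: "swap_factors w a i c j = y" unfolding swap_factors_def y_def G3_def G2_def G1_def n_def by simp
  have ne1: "G1 \<noteq> []" unfolding G1_def using slice_ne[of 0 a w] h by simp
  have ne2: "G2 \<noteq> []" unfolding G2_def using ne1 by simp
  have ne3: "G3 \<noteq> []" unfolding G3_def using ne2 by simp
  have L1: "last G1 = w ! j" unfolding G1_def
    using last_glue[OF slice_ne[of 0 a w] slice_ne[of c j w]] slice_last[of 0 a w] slice_last[of c j w] slice_hd[of c j w] h by auto
  have L2: "last G2 = w ! c" unfolding G2_def
    using last_glue[OF ne1 slice_ne[of i c w]] slice_last[of i c w] slice_hd[of i c w] h L1 by auto
  have L3: "last G3 = w ! i" unfolding G3_def
    using last_glue[OF ne2 slice_ne[of a i w]] slice_last[of a i w] slice_hd[of a i w] h L2 by auto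
  have B1: "bigrams G1 = bigrams (slice w 0 a) + bigrams (slice w c j)" unfolding G1_def
    using bigrams_glue[OF slice_ne[of 0 a w] slice_ne[of c j w]] slice_last[of 0 a w] slice_hd[of c j w] h by auto
  have B2: "bigrams G2 = bigrams G1 + bigrams (slice w i c)" unfolding G2_def
    using bigrams_glue[OF ne1 slice_ne[of i c w]] slice_hd[of i c w] h L1 by auto
  have B3: "bigrams G3 = bigrams G2 + bigrams (slice w a i)" unfolding G3_def
    using bigrams_glue[OF ne2 slice_ne[of a i w]] slice_hd[of a i w] h L2 by auto
  have B4: "bigrams y = bigrams G3 + bigrams (slice w j (n - 1))" unfolding y_def
    using bigrams_glue[OF ne3 slice_ne[of j "n - 1" w]] slice_hd[of j "n - 1" w] h L3 jn nn by auto
  have "bigrams w = bigrams (slice w 0 (n - 1))" using slice_all[OF ne] n_def by simp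
  also have "\<dots> = bigrams (slice w 0 a) + bigrams (slice w a (n - 1))"
    using bigrams_slice_split[of 0 a "n - 1" w] h jn nn by simp
  also have "bigrams (slice w a (n - 1)) = bigrams (slice w a i) + bigrams (slice w i (n - 1))"
    using bigrams_slice_split[of a i "n - 1" w] h jn nn by simp
  also have "bigrams (slice w i (n - 1)) = bigrams (slice w i c) + bigrams (slice w c (n - 1))"
    using bigrams_slice_split[of i c "n - 1" w] h jn nn by simp
  also have "bigrams (slice w c (n - 1)) = bigrams (slice w c j) + bigrams (slice w j (n - 1))"
    using bigrams_slice_split[of c j "n - 1" w] h jn nn by simp
  finally have "bigrams y = bigrams w" using B1 B2 B3 B4 by (simp add: add_ac)
  moreover have "y \<noteq> []" unfolding y_def using ne3 by simp
  moreover have "hd y = hd w"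
  proof -
    have "hd y = hd (slice w 0 a)" unfolding y_def G3_def G2_def G1_def
      using slice_ne[of 0 a w] h by (simp add: hd_append2)
    then show ?thesis using slice_hd[of 0 a w] h ne by (simp add: hd_conv_nth)
  qed
  moreover have "last y = last w" unfolding y_def
    using last_glue[OF ne3 slice_ne[of j "n - 1" w]] slice_last[of j "n - 1" w] slice_hd[of j "n - 1" w] h L3 jn nn ne n_def
    by (simp add: last_conv_nth)
  ultimately show ?thesis unfolding y using bigrams_delim[of y] bigrams_delim[OF ne] by simp
qed

lemma ambiguous_not_uniq_dec:
  assumes "ambiguous w" and "set w \<subseteq> \<Sigma>"
  shows "\<not> uniq_dec \<Sigma> w"
proof -
  obtain a c i j where h: "a < c" "c < j" "j < length w" "w ! a = w ! c" "w ! Suc a \<noteq> w ! Suc c"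
    "a \<le> i" "i \<le> c" "w ! i = w ! j" using assms(1) unfolding ambiguous_def by blast
  have "swap_factors w a i c j \<noteq> w" using swap_factors_nth_Suc[of a c j w i] h by auto
  moreover have "set (swap_factors w a i c j) \<subseteq> \<Sigma>" using set_swap_factors[of w a i c j] assms(2) by blast
  moreover have "bigram (delim (swap_factors w a i c j)) = bigram (delim w)"
    using bigrams_delim_swap_factors[of a i c j w] h bigram_eq_iff_bigrams_eq by auto
  ultimately show ?thesis unfolding uniq_dec_def by blast
qed

lemma bigram_walk_revisits:
  assumes B: "bigrams S = bigrams S'" and L: "length S = length S'" and e0: "S ! 0 = S' ! 0" and d1: "S ! 1 \<noteq> S' ! 1"
    and l1: "1 < length S" and r: "Suc r < length S" "S ! r = S ! 0" "S ! Suc r = S' ! 1"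
  shows "\<exists>i j. i \<le> r \<and> Suc r \<le> j \<and> j < length S \<and> S ! i = S ! j"
proof (rule ccontr)
  assume "\<not> (\<exists>i j. i \<le> r \<and> Suc r \<le> j \<and> j < length S \<and> S ! i = S ! j)"
  then have H: "\<And>i j. i \<le> r \<Longrightarrow> Suc r \<le> j \<Longrightarrow> j < length S \<Longrightarrow> S ! i \<noteq> S ! j" by blast
  define late where "late z \<longleftrightarrow> (\<exists>j. Suc r \<le> j \<and> j < length S \<and> S ! j = z)" for z
  have V: "1 \<le> q \<Longrightarrow> q < length S' \<Longrightarrow> late (S' ! q)" for q
  proof (induction q)
    case 0 then show ?case by simp
  next
    case (Suc q)
    show ?case
    proof (cases "q = 0")
      case True then show ?thesis unfolding late_def using r by (intro exI[of _ "Suc r"]) auto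
    next
      case False
      then have IH: "late (S' ! q)" using Suc by simp
      then obtain j0 where j0: "Suc r \<le> j0" "j0 < length S" "S ! j0 = S' ! q" unfolding late_def by blast
      have "(S' ! q, S' ! Suc q) \<in># bigrams S'" unfolding mem_bigrams_iff using Suc.prems by blast
      then have "(S' ! q, S' ! Suc q) \<in># bigrams S" using B by simp
      then obtain r2 where r2: "Suc r2 < length S" "S ! r2 = S' ! q" "S ! Suc r2 = S' ! Suc q"
        unfolding mem_bigrams_iff by blast
      have "\<not> r2 \<le> r" using H[of r2 j0] j0 r2 by auto
      then show ?thesis unfolding late_def using r2 by (intro exI[of _ "Suc r2"]) auto
    qed
  qed
  have "(S ! 0, S ! 1) \<in># bigrams S" unfolding mem_bigrams_iff using l1 by (intro exI[of _ 0]) auto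
  then have "(S ! 0, S ! 1) \<in># bigrams S'" using B by simp
  then obtain r3 where r3: "Suc r3 < length S'" "S' ! r3 = S ! 0" "S' ! Suc r3 = S ! 1"
    unfolding mem_bigrams_iff by blast
  show False
  proof (cases "r3 = 0")
    case True then show False using r3 d1 by simp
  next
    case False
    then have "late (S' ! r3)" using V[of r3] r3(1) by auto
    then obtain j0 where "Suc r \<le> j0" "j0 < length S" "S ! j0 = S ! 0" unfolding late_def using r3 by auto
    then show False using H[of 0 j0] by auto
  qed
qed

lemma ambiguous_of_bigrams_eq:
  assumes B: "bigrams S = bigrams S'" and L: "length S = length S'" and e0: "S ! 0 = S' ! 0"
    and d1: "S ! 1 \<noteq> S' ! 1" and l1: "1 < length S"
  shows "ambiguous S"
proof -
  have "(S' ! 0, S' ! 1) \<in># bigrams S'" unfolding mem_bigrams_iff using l1 L by (intro exI[of _ 0]) auto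
  then have "(S ! 0, S' ! 1) \<in># bigrams S" using B e0 by simp
  then obtain r where r: "Suc r < length S" "S ! r = S ! 0" "S ! Suc r = S' ! 1"
    unfolding mem_bigrams_iff by blast
  have "r \<noteq> 0" using r(3) d1 by (cases r) auto
  obtain i j where "i \<le> r" "Suc r \<le> j" "j < length S" "S ! i = S ! j"
    using bigram_walk_revisits[OF B L e0 d1 l1 r] by blast
  then show ?thesis unfolding ambiguous_def using r d1 \<open>r \<noteq> 0\<close>
    by (intro exI[of _ 0] exI[of _ r] exI[of _ i] exI[of _ j]) auto
qed

lemma ambiguous_drop: "ambiguous (drop A xs) \<Longrightarrow> ambiguous xs"
proof -
  assume "ambiguous (drop A xs)"
  then obtain a c i j where h: "a < c" "c < j" "j < length xs - A" "xs ! (A + a) = xs ! (A + c)"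
    "xs ! (A + Suc a) \<noteq> xs ! (A + Suc c)" "a \<le> i" "i \<le> c" "xs ! (A + i) = xs ! (A + j)"
    unfolding ambiguous_def by auto
  show "ambiguous xs" unfolding ambiguous_def
    by (rule exI[of _ "A + a"], rule exI[of _ "A + c"], rule exI[of _ "A + i"], rule exI[of _ "A + j"])
       (use h in auto)
qed

lemma delim_nth:
  "k < length w + 2 \<Longrightarrow> delim w ! k = (if k = 0 then None else if k \<le> length w then Some (w ! (k - 1)) else None)"
  unfolding delim_def by (auto simp: nth_append nth_Cons')

text \<open>The delimiter can take part in no ambiguity: it occurs only at both ends.\<close>

lemma ambiguous_delim: "ambiguous (delim w) \<Longrightarrow> ambiguous w"
proof -
  assume "ambiguous (delim w)"
  moreover have "length (delim w) = length w + 2" by (simp add: delim_def)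
  ultimately obtain a c i j where h: "a < c" "c < j" "j < length w + 2" "delim w ! a = delim w ! c"
    "delim w ! Suc a \<noteq> delim w ! Suc c" "a \<le> i" "i \<le> c" "delim w ! i = delim w ! j"
    unfolding ambiguous_def by auto
  note d = delim_nth[of _ w]
  have a0: "a \<noteq> 0" using h(1-4) d[of a] d[of c] by (auto split: if_splits)
  have jn: "j \<le> length w" using h(1-3,6-8) a0 d[of i] d[of j] by (auto split: if_splits)
  have "w ! (a - 1) = w ! (c - 1)" "w ! a \<noteq> w ! c" "w ! (i - 1) = w ! (j - 1)"
    using h a0 jn d[of a] d[of c] d[of "Suc a"] d[of "Suc c"] d[of i] d[of j] by auto
  then show "ambiguous w" unfolding ambiguous_def using h a0 jn
    by (intro exI[of _ "a - 1"] exI[of _ "c - 1"] exI[of _ "i - 1"] exI[of _ "j - 1"]) auto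
qed

lemma not_uniq_dec_ambiguous:
  assumes "\<not> uniq_dec \<Sigma> w"
  shows "ambiguous w"
proof -
  obtain x where x: "bigram (delim x) = bigram (delim w)" "x \<noteq> w" using assms unfolding uniq_dec_def by blast
  define s where "s = delim w"
  define s' where "s' = delim x"
  have B: "bigrams s = bigrams s'" using x(1) bigram_eq_iff_bigrams_eq unfolding s_def s'_def by metis
  have Ls: "length s = length s'"
    using size_bigrams[of s] size_bigrams[of s'] B unfolding s_def s'_def delim_def by simp
  have "s \<noteq> s'" using x(2) unfolding s_def s'_def delim_def by (simp add: inj_map_eq_map)
  then have ex: "\<exists>p. p < length s \<and> s ! p \<noteq> s' ! p" using Ls nth_equalityI by blast
  define p where "p = (LEAST p. p < length s \<and> s ! p \<noteq> s' ! p)"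
  have p: "p < length s" "s ! p \<noteq> s' ! p" using LeastI_ex[OF ex] unfolding p_def by auto
  have pmin: "s ! i = s' ! i" if "i < p" for i
    using not_less_Least[of i] that p(1) unfolding p_def by fastforce
  have "p \<noteq> 0" using p unfolding s_def s'_def delim_def by (cases p) auto
  have split: "bigrams z = bigrams (take p z) + bigrams (drop (p - 1) z)" if "p < length z" for z :: "'a option list"
  proof -
    have "z = take (p - 1) z @ z ! (p - 1) # drop p z"
      using that id_take_nth_drop[of "p - 1" z] \<open>p \<noteq> 0\<close> by simp
    then have "bigrams z = bigrams (take (p - 1) z @ [z ! (p - 1)]) + bigrams (z ! (p - 1) # drop p z)"
      using bigrams_split by metis
    moreover have "take (p - 1) z @ [z ! (p - 1)] = take p z"
      using that \<open>p \<noteq> 0\<close> take_Suc_conv_app_nth[of "p - 1" z] by simp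
    moreover have "z ! (p - 1) # drop p z = drop (p - 1) z"
      using that \<open>p \<noteq> 0\<close> Cons_nth_drop_Suc[of "p - 1" z] by simp
    ultimately show ?thesis by simp
  qed
  have "take p s = take p s'" using pmin p(1) Ls by (intro nth_equalityI) auto
  then have "bigrams (drop (p - 1) s) = bigrams (drop (p - 1) s')" using split[of s] split[of s'] p(1) Ls B by simp
  moreover have "drop (p - 1) s ! 0 = drop (p - 1) s' ! 0" "drop (p - 1) s ! 1 \<noteq> drop (p - 1) s' ! 1"
    using pmin[of "p - 1"] p Ls \<open>p \<noteq> 0\<close> by auto
  ultimately have "ambiguous (drop (p - 1) s)"
    using ambiguous_of_bigrams_eq[of "drop (p - 1) s" "drop (p - 1) s'"] p(1) Ls \<open>p \<noteq> 0\<close> by simp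
  then show "ambiguous w" using ambiguous_drop ambiguous_delim unfolding s_def by blast
qed

lemma uniq_dec_iff_not_ambiguous: "uniq_dec \<Sigma> w \<longleftrightarrow> \<not> ambiguous w" if "set w \<subseteq> \<Sigma>"
  using ambiguous_not_uniq_dec[OF _ that] not_uniq_dec_ambiguous by blast

section \<open>Ambiguity of one-letter extensions\<close>

definition covered :: "'a list \<Rightarrow> nat \<Rightarrow> bool" where
  "covered w q \<longleftrightarrow> (\<exists>a c. a < c \<and> Suc c < length w \<and> w ! a = w ! c \<and> w ! Suc a \<noteq> w ! Suc c \<and> a < q \<and> q \<le> Suc c)"

lemma ambiguous_snoc: "ambiguous w \<Longrightarrow> ambiguous (w @ [u])"
proof -
  assume "ambiguous w"
  then obtain a c i j where h: "a < c" "c < j" "j < length w" "w ! a = w ! c" "w ! Suc a \<noteq> w ! Suc c"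
    "a \<le> i" "i \<le> c" "w ! i = w ! j" unfolding ambiguous_def by blast
  show "ambiguous (w @ [u])" unfolding ambiguous_def
    by (rule exI[of _ a], rule exI[of _ c], rule exI[of _ i], rule exI[of _ j]) (use h in \<open>auto simp: nth_append\<close>)
qed

lemma covered_snoc:
  assumes "w \<noteq> []"
  shows "covered (w @ [u]) q \<longleftrightarrow> covered w q \<or>
    (\<exists>a. a < length w - 1 \<and> w ! a = w ! (length w - 1) \<and> w ! Suc a \<noteq> u \<and> a < q \<and> q \<le> length w)"
proof
  assume "covered (w @ [u]) q"
  then obtain a c where h: "a < c" "Suc c < length w + 1" "(w@[u]) ! a = (w@[u]) ! c"
    "(w@[u]) ! Suc a \<noteq> (w@[u]) ! Suc c" "a < q" "q \<le> Suc c" unfolding covered_def by auto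
  show "covered w q \<or> (\<exists>a. a < length w - 1 \<and> w ! a = w ! (length w - 1) \<and> w ! Suc a \<noteq> u \<and> a < q \<and> q \<le> length w)"
  proof (cases "Suc c < length w")
    case True
    then have "covered w q" unfolding covered_def using h by (intro exI[of _ a] exI[of _ c]) (auto simp: nth_append)
    then show ?thesis by simp
  next
    case False
    then have c: "Suc c = length w" using h(2) by auto
    have "(w@[u]) ! Suc c = u" using c by (simp add: nth_append)
    moreover have "c = length w - 1" using c by auto
    ultimately show ?thesis using h c by (intro disjI2 exI[of _ a]) (auto simp: nth_append)
  qed
next
  assume "covered w q \<or> (\<exists>a. a < length w - 1 \<and> w ! a = w ! (length w - 1) \<and> w ! Suc a \<noteq> u \<and> a < q \<and> q \<le> length w)"
  then show "covered (w @ [u]) q"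
  proof
    assume "covered w q"
    then obtain a c where h: "a < c" "Suc c < length w" "w ! a = w ! c" "w ! Suc a \<noteq> w ! Suc c" "a < q" "q \<le> Suc c"
      unfolding covered_def by auto
    show ?thesis unfolding covered_def using h by (intro exI[of _ a] exI[of _ c]) (auto simp: nth_append)
  next
    assume "\<exists>a. a < length w - 1 \<and> w ! a = w ! (length w - 1) \<and> w ! Suc a \<noteq> u \<and> a < q \<and> q \<le> length w"
    then obtain a where h: "a < length w - 1" "w ! a = w ! (length w - 1)" "w ! Suc a \<noteq> u" "a < q" "q \<le> length w" by auto
    show ?thesis unfolding covered_def using h assms
      by (intro exI[of _ a] exI[of _ "length w - 1"]) (auto simp: nth_append)
  qed
qed

lemma covered_snoc_first_occ:
  assumes na: "\<not> ambiguous w" and ne: "w \<noteq> []" and a0: "a0 < length w" "w ! a0 = w ! (length w - 1)"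
    "\<forall>i<a0. w ! i \<noteq> w ! (length w - 1)"
  shows "(\<exists>a. a < length w - 1 \<and> w ! a = w ! (length w - 1) \<and> w ! Suc a \<noteq> u \<and> a < q \<and> q \<le> length w) \<longleftrightarrow>
    (a0 < length w - 1 \<and> w ! Suc a0 \<noteq> u \<and> a0 < q \<and> q \<le> length w)"
proof
  assume "\<exists>a. a < length w - 1 \<and> w ! a = w ! (length w - 1) \<and> w ! Suc a \<noteq> u \<and> a < q \<and> q \<le> length w"
  then obtain a where h: "a < length w - 1" "w ! a = w ! (length w - 1)" "w ! Suc a \<noteq> u" "a < q" "q \<le> length w" by auto
  have aa: "a0 \<le> a" using a0(3) h(2) by (meson not_le)
  have "w ! Suc a0 \<noteq> u"
  proof
    assume e: "w ! Suc a0 = u"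
    then have "a0 \<noteq> a" using h(3) by auto
    then have "a0 < a" using aa by simp
    then have "ambiguous w" unfolding ambiguous_def using h a0
      by (intro exI[of _ a0] exI[of _ a] exI[of _ a] exI[of _ "length w - 1"]) (auto simp: e)
    then show False using na by simp
  qed
  then show "a0 < length w - 1 \<and> w ! Suc a0 \<noteq> u \<and> a0 < q \<and> q \<le> length w" using h aa by auto
next
  assume "a0 < length w - 1 \<and> w ! Suc a0 \<noteq> u \<and> a0 < q \<and> q \<le> length w"
  then show "\<exists>a. a < length w - 1 \<and> w ! a = w ! (length w - 1) \<and> w ! Suc a \<noteq> u \<and> a < q \<and> q \<le> length w"
    using a0 by (intro exI[of _ a0]) auto
qed

lemma not_ambiguous_snoc_fresh: "\<not> ambiguous w \<Longrightarrow> u \<notin> set w \<Longrightarrow> \<not> ambiguous (w @ [u])"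
proof
  assume na: "\<not> ambiguous w" and u: "u \<notin> set w" and "ambiguous (w @ [u])"
  then obtain a c i j where h: "a < c" "c < j" "j < length w + 1" "(w@[u]) ! a = (w@[u]) ! c"
    "(w@[u]) ! Suc a \<noteq> (w@[u]) ! Suc c" "a \<le> i" "i \<le> c" "(w@[u]) ! i = (w@[u]) ! j" unfolding ambiguous_def by auto
  show False
  proof (cases "j < length w")
    case True
    then have "ambiguous w" unfolding ambiguous_def using h by (intro exI[of _ a] exI[of _ c] exI[of _ i] exI[of _ j]) (auto simp: nth_append)
    then show False using na by simp
  next
    case False
    then have "j = length w" using h by simp
    then have "w ! i = u" using h by (auto simp: nth_append)
    moreover have "i < length w" using h \<open>j = length w\<close> by simp
    ultimately show False using u nth_mem by fastforce
  qed
qed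

lemma ambiguous_snoc_iff_covered:
  assumes na: "\<not> ambiguous w" and l: "l < length w" "w ! l = u" "\<forall>i. l < i \<and> i < length w \<longrightarrow> w ! i \<noteq> u"
  shows "ambiguous (w @ [u]) \<longleftrightarrow> covered (w @ [u]) (Suc l)"
proof
  assume "ambiguous (w @ [u])"
  then obtain a c i j where h: "a < c" "c < j" "j < length w + 1" "(w@[u]) ! a = (w@[u]) ! c"
    "(w@[u]) ! Suc a \<noteq> (w@[u]) ! Suc c" "a \<le> i" "i \<le> c" "(w@[u]) ! i = (w@[u]) ! j" unfolding ambiguous_def by auto
  have jn: "j = length w"
  proof (rule ccontr)
    assume "j \<noteq> length w"
    then have "ambiguous w" unfolding ambiguous_def using h by (intro exI[of _ a] exI[of _ c] exI[of _ i] exI[of _ j]) (auto simp: nth_append)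
    then show False using na by simp
  qed
  then have wi: "w ! i = u" "i < length w" using h by (auto simp: nth_append)
  have il: "i \<le> l"
  proof (rule ccontr)
    assume "\<not> i \<le> l"
    then show False using l(3) wi by auto
  qed
  show "covered (w @ [u]) (Suc l)"
  proof (cases "l \<le> c")
    case True
    then show ?thesis unfolding covered_def using h jn il by (intro exI[of _ a] exI[of _ c]) auto
  next
    case False
    then have "ambiguous w" unfolding ambiguous_def using h jn il l wi
      by (intro exI[of _ a] exI[of _ c] exI[of _ i] exI[of _ l]) (auto simp: nth_append)
    then show ?thesis using na by simp
  qed
next
  assume "covered (w @ [u]) (Suc l)"
  then obtain a c where h: "a < c" "Suc c < length (w @ [u])" "(w@[u]) ! a = (w@[u]) ! c"
    "(w@[u]) ! Suc a \<noteq> (w@[u]) ! Suc c" "a < Suc l" "Suc l \<le> Suc c" unfolding covered_def by auto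
  show "ambiguous (w @ [u])" unfolding ambiguous_def using h l
    by (intro exI[of _ a] exI[of _ c] exI[of _ l] exI[of _ "length w"]) (auto simp: nth_append)
qed

section \<open>Stacks of disjoint intervals\<close>

fun pop_merge :: "(nat \<Rightarrow> nat) \<Rightarrow> (nat \<Rightarrow> nat) \<Rightarrow> nat \<Rightarrow> nat \<Rightarrow> nat \<times> nat" where
  "pop_merge F C h f = (if h = 0 then (0, f) else if f \<le> C h then
      pop_merge F C (h - 1) (if F h \<le> f then F h else f) else (h, f))"

declare pop_merge.simps[simp del]

lemma pop_merge_0[simp]: "pop_merge F C 0 f = (0, f)" by (simp add: pop_merge.simps)
lemma pop_merge_pop: "h \<noteq> 0 \<Longrightarrow> f \<le> C h \<Longrightarrow> pop_merge F C h f = pop_merge F C (h - 1) (if F h \<le> f then F h else f)"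
  by (simp add: pop_merge.simps)
lemma pop_merge_stop: "h \<noteq> 0 \<Longrightarrow> \<not> f \<le> C h \<Longrightarrow> pop_merge F C h f = (h, f)"
  by (simp add: pop_merge.simps)
lemma pop_merge_fst_le: "fst (pop_merge F C h f) \<le> h"
proof (induction F C h f rule: pop_merge.induct)
  case (1 F C h f)
  show ?case
  proof (cases "h = 0")
    case True then show ?thesis by simp
  next
    case False
    show ?thesis
    proof (cases "f \<le> C h")
      case True
      then show ?thesis using 1 False pop_merge_pop[of h f C F, OF False True] by simp
    next
      case False2: False
      then show ?thesis using pop_merge_stop[of h f C F, OF False False2] by simp
    qed
  qed
qed

definition sorted_ivls :: "(nat \<Rightarrow> nat) \<Rightarrow> (nat \<Rightarrow> nat) \<Rightarrow> nat \<Rightarrow> bool" where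
  "sorted_ivls F C h \<longleftrightarrow> (\<forall>i. 1 \<le> i \<and> i \<le> h \<longrightarrow> 1 \<le> F i \<and> F i \<le> C i) \<and> (\<forall>i. 1 \<le> i \<and> i < h \<longrightarrow> C i < F (Suc i))"

definition in_ivls :: "(nat \<Rightarrow> nat) \<Rightarrow> (nat \<Rightarrow> nat) \<Rightarrow> nat \<Rightarrow> nat \<Rightarrow> bool" where
  "in_ivls F C h q \<longleftrightarrow> (\<exists>i. 1 \<le> i \<and> i \<le> h \<and> F i \<le> q \<and> q \<le> C i)"

definition gap_at :: "(nat \<Rightarrow> nat) \<Rightarrow> (nat \<Rightarrow> nat) \<Rightarrow> nat \<Rightarrow> nat \<Rightarrow> nat \<Rightarrow> bool" where
  "gap_at F C h q hx \<longleftrightarrow> hx \<le> h \<and> (hx \<noteq> 0 \<longrightarrow> C hx < q) \<and> (hx < h \<longrightarrow> q < F (Suc hx))"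

lemma sorted_ivls_hi_less_lo: "sorted_ivls F C h \<Longrightarrow> 1 \<le> i \<Longrightarrow> i < j \<Longrightarrow> j \<le> h \<Longrightarrow> C i < F j"
proof (induction j)
  case 0 then show ?case by simp
next
  case (Suc j)
  show ?case
  proof (cases "i = j")
    case True then show ?thesis using Suc.prems unfolding sorted_ivls_def by auto
  next
    case False
    then have "C i < F j" using Suc by auto
    moreover have "F j \<le> C j" "C j < F (Suc j)" using Suc.prems False unfolding sorted_ivls_def by auto
    ultimately show ?thesis by simp
  qed
qed

lemma sorted_ivls_hi_mono: assumes "sorted_ivls F C h" "1 \<le> i" "i \<le> j" "j \<le> h" shows "C i \<le> C j"
proof (cases "i = j")
  case False
  then have "C i < F j" using sorted_ivls_hi_less_lo[OF assms(1,2) _ assms(4)] assms(3) by simp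
  moreover have "F j \<le> C j" using assms unfolding sorted_ivls_def by auto
  ultimately show ?thesis by simp
qed simp

lemma sorted_ivls_lo_mono: "sorted_ivls F C h \<Longrightarrow> 1 \<le> i \<Longrightarrow> i \<le> j \<Longrightarrow> j \<le> h \<Longrightarrow> F i \<le> F j"
  using sorted_ivls_hi_less_lo[of F C h i j] unfolding sorted_ivls_def by (cases "i = j") auto

lemma sorted_ivls_prefix: "sorted_ivls F C h \<Longrightarrow> h' \<le> h \<Longrightarrow> sorted_ivls F C h'"
  unfolding sorted_ivls_def by auto

lemma in_ivls_iff_not_gap_at:
  assumes S: "sorted_ivls F C h" and gap: "\<not> in_ivls F C h q \<Longrightarrow> gap_at F C h q hx"
  shows "in_ivls F C h q \<longleftrightarrow> \<not> gap_at F C h q hx"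
proof
  assume "in_ivls F C h q"
  then obtain i where i: "1 \<le> i" "i \<le> h" "F i \<le> q" "q \<le> C i" unfolding in_ivls_def by auto
  show "\<not> gap_at F C h q hx"
  proof
    assume T: "gap_at F C h q hx"
    show False
    proof (cases "i \<le> hx")
      case True
      then have "C i \<le> C hx" using sorted_ivls_hi_mono[OF S i(1) True] T unfolding gap_at_def by simp
      then show False using T i True unfolding gap_at_def by auto
    next
      case False
      then have "F (Suc hx) \<le> F i" using sorted_ivls_lo_mono[OF S _ _ i(2)] by auto
      then show False using T i False unfolding gap_at_def by auto
    qed
  qed
qed (use gap in blast)

lemma pop_merge_props:
  assumes "sorted_ivls F C h"
  shows "fst (pop_merge F C h f) \<le> h \<and>
    (fst (pop_merge F C h f) \<noteq> 0 \<longrightarrow> C (fst (pop_merge F C h f)) < snd (pop_merge F C h f)) \<and>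
    (\<forall>i. fst (pop_merge F C h f) < i \<and> i \<le> h \<longrightarrow> f \<le> C i) \<and>
    snd (pop_merge F C h f) \<le> f \<and>
    (fst (pop_merge F C h f) < h \<longrightarrow> snd (pop_merge F C h f) = min f (F (Suc (fst (pop_merge F C h f))))) \<and>
    (fst (pop_merge F C h f) = h \<longrightarrow> snd (pop_merge F C h f) = f)"
  using assms
proof (induction F C h f rule: pop_merge.induct)
  case (1 F C h f)
  show ?case
  proof (cases "h = 0")
    case True then show ?thesis by simp
  next
    case hne: False
    show ?thesis
    proof (cases "f \<le> C h")
      case True
      define f1 where "f1 = (if F h \<le> f then F h else f)"
      have ml: "pop_merge F C h f = pop_merge F C (h - 1) f1"
        using pop_merge_pop[of h f C F, OF hne True] unfolding f1_def by simp
      have S1: "sorted_ivls F C (h - 1)" using 1(2) sorted_ivls_prefix by auto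
      have IH: "fst (pop_merge F C (h - 1) f1) \<le> h - 1 \<and>
        (fst (pop_merge F C (h - 1) f1) \<noteq> 0 \<longrightarrow> C (fst (pop_merge F C (h - 1) f1)) < snd (pop_merge F C (h - 1) f1)) \<and>
        (\<forall>i. fst (pop_merge F C (h - 1) f1) < i \<and> i \<le> h - 1 \<longrightarrow> f1 \<le> C i) \<and>
        snd (pop_merge F C (h - 1) f1) \<le> f1 \<and>
        (fst (pop_merge F C (h - 1) f1) < h - 1 \<longrightarrow> snd (pop_merge F C (h - 1) f1) = min f1 (F (Suc (fst (pop_merge F C (h - 1) f1))))) \<and>
        (fst (pop_merge F C (h - 1) f1) = h - 1 \<longrightarrow> snd (pop_merge F C (h - 1) f1) = f1)"
        using 1(1)[OF hne True S1] unfolding f1_def by simp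
      define h' where "h' = fst (pop_merge F C (h - 1) f1)"
      define f' where "f' = snd (pop_merge F C (h - 1) f1)"
      note IH = IH[folded h'_def f'_def]
      have f1f: "f1 \<le> f" unfolding f1_def by auto
      have popped: "f1 = f" if "h' < h - 1"
      proof -
        have "f1 \<le> C (h - 1)" using IH that by auto
        moreover have "C (h - 1) < F h" using sorted_ivls_hi_less_lo[OF 1(2), of "h - 1" h] that by auto
        ultimately show ?thesis unfolding f1_def by auto
      qed
      have P3: "\<forall>i. h' < i \<and> i \<le> h \<longrightarrow> f \<le> C i"
      proof (intro allI impI)
        fix i assume i: "h' < i \<and> i \<le> h"
        show "f \<le> C i"
        proof (cases "i = h")
          case True then show ?thesis using \<open>f \<le> C h\<close> by simp
        next
          case False
          then have "h' < h - 1" using i by auto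
          then show ?thesis using popped IH i False by auto
        qed
      qed
      have P5: "h' < h \<longrightarrow> f' = min f (F (Suc h'))"
      proof
        assume "h' < h"
        show "f' = min f (F (Suc h'))"
        proof (cases "h' < h - 1")
          case True then show ?thesis using IH popped by auto
        next
          case False
          then have "h' = h - 1" using \<open>h' < h\<close> by auto
          then show ?thesis using IH hne unfolding f1_def by auto
        qed
      qed
      have I1: "h' \<le> h - 1" using IH by blast
      have A1: "h' \<le> h" using I1 by simp
      have A2: "h' \<noteq> 0 \<longrightarrow> C h' < f'" using IH by blast
      have I4: "f' \<le> f1" using IH by blast
      have A4: "f' \<le> f" using I4 f1f by simp
      have A6: "h' = h \<longrightarrow> f' = f" using I1 hne by auto
      show ?thesis unfolding ml h'_def[symmetric] f'_def[symmetric]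
        using A1 A2 P3 A4 P5 A6 by blast
    next
      case False
      then show ?thesis using pop_merge_stop[of h f C F, OF hne False] by simp
    qed
  qed
qed

lemma sorted_ivls_push_merged:
  assumes S: "sorted_ivls F C h" and f1: "1 \<le> f" and fc: "f \<le> c"
  defines "h' \<equiv> fst (pop_merge F C h f)" and "f' \<equiv> snd (pop_merge F C h f)"
  shows "sorted_ivls (F(Suc h' := f')) (C(Suc h' := c)) (Suc h')"
proof -
  have M: "h' \<le> h" "h' \<noteq> 0 \<longrightarrow> C h' < f'" "\<forall>i. h' < i \<and> i \<le> h \<longrightarrow> f \<le> C i" "f' \<le> f"
    "h' < h \<longrightarrow> f' = min f (F (Suc h'))" "h' = h \<longrightarrow> f' = f"
    using pop_merge_props[OF S, of f] unfolding h'_def f'_def by auto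
  have f'1: "1 \<le> f'"
  proof (cases "h' < h")
    case True
    then have "1 \<le> F (Suc h')" using S unfolding sorted_ivls_def by auto
    then show ?thesis using M(5) True f1 by auto
  next
    case False then show ?thesis using M(1,6) f1 by auto
  qed
  show ?thesis
    unfolding sorted_ivls_def
  proof (intro conjI allI impI)
    fix i assume i: "1 \<le> i \<and> i \<le> Suc h'"
    show "1 \<le> (F(Suc h' := f')) i" using i f'1 S M(1) unfolding sorted_ivls_def by auto
    show "(F(Suc h' := f')) i \<le> (C(Suc h' := c)) i" using i M(1,4) fc S unfolding sorted_ivls_def by auto
  next
    fix i assume i: "1 \<le> i \<and> i < Suc h'"
    show "(C(Suc h' := c)) i < (F(Suc h' := f')) (Suc i)"
    proof (cases "i = h'")
      case True then show ?thesis using M(2) i by auto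
    next
      case False
      then have "i < h'" using i by auto
      then show ?thesis using S M(1) i unfolding sorted_ivls_def by auto
    qed
  qed
qed

lemma in_ivls_push_merged:
  fixes f :: nat
  assumes S: "sorted_ivls F C h" and ch: "h \<noteq> 0 \<longrightarrow> C h < c"
  defines "h' \<equiv> fst (pop_merge F C h f)" and "f' \<equiv> snd (pop_merge F C h f)"
  shows "in_ivls (F(Suc h' := f')) (C(Suc h' := c)) (Suc h') q \<longleftrightarrow> in_ivls F C h q \<or> (f \<le> q \<and> q \<le> c)"
proof -
  have M: "h' \<le> h" "h' \<noteq> 0 \<longrightarrow> C h' < f'" "\<forall>i. h' < i \<and> i \<le> h \<longrightarrow> f \<le> C i" "f' \<le> f"
    "h' < h \<longrightarrow> f' = min f (F (Suc h'))" "h' = h \<longrightarrow> f' = f"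
    using pop_merge_props[OF S, of f] unfolding h'_def f'_def by auto
  have f'F: "h' < h \<Longrightarrow> f' \<le> F (Suc h')" using M(5) by auto
  show ?thesis
  proof
    assume "in_ivls (F(Suc h' := f')) (C(Suc h' := c)) (Suc h') q"
    then obtain i where i: "1 \<le> i" "i \<le> Suc h'" "(F(Suc h' := f')) i \<le> q" "q \<le> (C(Suc h' := c)) i"
      unfolding in_ivls_def by auto
    show "in_ivls F C h q \<or> (f \<le> q \<and> q \<le> c)"
    proof (cases "i = Suc h'")
      case False
      then have "F i \<le> q" "q \<le> C i" "i \<le> h" using i M(1) by auto
      then show ?thesis unfolding in_ivls_def using i(1) by auto
    next
      case True
      then have q: "f' \<le> q" "q \<le> c" using i by auto
      show ?thesis
      proof (cases "f \<le> q")
        case True then show ?thesis using q by auto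
      next
        case False
        then have hh: "h' < h" using M(1) M(6) q by auto
        then have "f' = F (Suc h')" using M(5) False q by auto
        moreover have "f \<le> C (Suc h')" using M(3) hh by auto
        ultimately have "F (Suc h') \<le> q" "q \<le> C (Suc h')" using q False by auto
        then show ?thesis unfolding in_ivls_def using hh by (intro disjI1 exI[of _ "Suc h'"]) auto
      qed
    qed
  next
    assume "in_ivls F C h q \<or> (f \<le> q \<and> q \<le> c)"
    then show "in_ivls (F(Suc h' := f')) (C(Suc h' := c)) (Suc h') q"
    proof
      assume "in_ivls F C h q"
      then obtain i where i: "1 \<le> i" "i \<le> h" "F i \<le> q" "q \<le> C i" unfolding in_ivls_def by auto
      show ?thesis
      proof (cases "i \<le> h'")
        case True then show ?thesis unfolding in_ivls_def using i by (intro exI[of _ i]) auto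
      next
        case False
        then have hh: "h' < h" using i by auto
        have "F (Suc h') \<le> F i" using sorted_ivls_lo_mono[OF S, of "Suc h'" i] False i by auto
        then have a: "f' \<le> q" using f'F[OF hh] i by auto
        have "C i \<le> C h" using sorted_ivls_hi_mono[OF S i(1) i(2)] by simp
        then have b: "q \<le> c" using ch i by auto
        show ?thesis unfolding in_ivls_def using a b by (intro exI[of _ "Suc h'"]) auto
      qed
    next
      assume "f \<le> q \<and> q \<le> c"
      then show ?thesis unfolding in_ivls_def using M(4) by (intro exI[of _ "Suc h'"]) auto
    qed
  qed
qed

lemma gap_at_push_merged:
  fixes f :: nat
  assumes S: "sorted_ivls F C h" and qc: "q \<le> c" and T: "gap_at F C h q hx"
  defines "h' \<equiv> fst (pop_merge F C h f)" and "f' \<equiv> snd (pop_merge F C h f)"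
  assumes nc: "\<not> in_ivls (F(Suc h' := f')) (C(Suc h' := c)) (Suc h') q"
  shows "gap_at (F(Suc h' := f')) (C(Suc h' := c)) (Suc h') q hx"
proof -
  have M: "h' \<le> h" "h' \<noteq> 0 \<longrightarrow> C h' < f'" "\<forall>i. h' < i \<and> i \<le> h \<longrightarrow> f \<le> C i" "f' \<le> f"
    "h' < h \<longrightarrow> f' = min f (F (Suc h'))" "h' = h \<longrightarrow> f' = f"
    using pop_merge_props[OF S, of f] unfolding h'_def f'_def by auto
  have f'F: "h' < h \<Longrightarrow> f' \<le> F (Suc h')" using M(5) by auto
  have qf: "q < f'"
  proof (rule ccontr)
    assume "\<not> q < f'"
    then have "in_ivls (F(Suc h' := f')) (C(Suc h' := c)) (Suc h') q" unfolding in_ivls_def using qc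
      by (intro exI[of _ "Suc h'"]) auto
    then show False using nc by simp
  qed
  have T1: "hx \<le> h" "hx \<noteq> 0 \<longrightarrow> C hx < q" "hx < h \<longrightarrow> q < F (Suc hx)" using T unfolding gap_at_def by auto
  have hxh: "hx \<le> h'"
  proof (rule ccontr)
    assume "\<not> hx \<le> h'"
    then have hh: "h' < h" "Suc h' \<le> hx" using T1(1) by auto
    have "F (Suc h') \<le> F hx" using sorted_ivls_lo_mono[OF S, of "Suc h'" hx] hh T1(1) by auto
    moreover have "F hx \<le> C hx" using S hh T1(1) unfolding sorted_ivls_def by auto
    ultimately show False using f'F[OF hh(1)] qf T1(2) hh by auto
  qed
  show "gap_at (F(Suc h' := f')) (C(Suc h' := c)) (Suc h') q hx"
    unfolding gap_at_def
  proof (intro conjI impI)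
    show "hx \<le> Suc h'" using hxh by simp
    show "hx \<noteq> 0 \<Longrightarrow> (C(Suc h' := c)) hx < q" using hxh T1(2) by auto
    show "(F(Suc h' := f')) (Suc hx) > q" if "hx < Suc h'"
    proof (cases "hx = h'")
      case True then show ?thesis using qf by simp
    next
      case False then show ?thesis using hxh T1(3) M(1) by auto
    qed
  qed
qed

lemma pop_merge_snd_le: "(\<forall>y\<le>h. F y \<le> V) \<Longrightarrow> f \<le> (V::nat) \<Longrightarrow> snd (pop_merge F C h f) \<le> V"
proof (induction F C h f rule: pop_merge.induct)
  case (1 F C h f)
  show ?case
  proof (cases "h = 0")
    case True then show ?thesis using 1 by simp
  next
    case False
    show ?thesis
    proof (cases "f \<le> C h")
      case True
      have "snd (pop_merge F C (h - 1) (if F h \<le> f then F h else f)) \<le> V"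
        using 1(1)[OF False True] 1(2,3) by auto
      then show ?thesis using pop_merge_pop[of h f C F, OF False True] by simp
    next
      case False2: False
      then show ?thesis using pop_merge_stop[of h f C F, OF False False2] 1 by simp
    qed
  qed
qed

lemma height_le_card:
  assumes S: "sorted_ivls F C H" and CH: "H \<noteq> 0 \<longrightarrow> C H \<le> length w"
    and L: "\<forall>i. 1 \<le> i \<and> i \<le> H \<longrightarrow> last_of (w ! (C i - 1)) = C i"
  shows "H \<le> card (set w)"
proof -
  have Cle: "C i \<le> length w" "1 \<le> C i" if "1 \<le> i" "i \<le> H" for i
  proof -
    show "C i \<le> length w" using sorted_ivls_hi_mono[OF S that(1,2) order.refl] CH that by auto
    show "1 \<le> C i" using S that unfolding sorted_ivls_def by fastforce
  qed
  have inj: "inj_on (\<lambda>i. w ! (C i - 1)) {1..H}"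
  proof (rule inj_onI)
    fix i j assume i: "i \<in> {1..H}" and j: "j \<in> {1..H}" and e: "w ! (C i - 1) = w ! (C j - 1)"
    have "C i = C j" using L i j e by (metis atLeastAtMost_iff)
    show "i = j"
    proof (rule ccontr)
      assume "i \<noteq> j"
      then consider "i < j" | "j < i" by linarith
      then show False
      proof cases
        case 1
        have "C i < F j" using sorted_ivls_hi_less_lo[OF S _ 1] i j by auto
        moreover have "F j \<le> C j" using S j unfolding sorted_ivls_def by auto
        ultimately show False using \<open>C i = C j\<close> by simp
      next
        case 2
        have "C j < F i" using sorted_ivls_hi_less_lo[OF S _ 2] i j by auto
        moreover have "F i \<le> C i" using S i unfolding sorted_ivls_def by auto
        ultimately show False using \<open>C i = C j\<close> by simp
      qed
    qed
  qed
  have sub: "(\<lambda>i. w ! (C i - 1)) ` {1..H} \<subseteq> set w"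
  proof
    fix y assume "y \<in> (\<lambda>i. w ! (C i - 1)) ` {1..H}"
    then obtain i where i: "i \<in> {1..H}" "y = w ! (C i - 1)" by auto
    then have "C i - 1 < length w" using Cle[of i] by auto
    then show "y \<in> set w" using i by simp
  qed
  have "card {1..H} \<le> card (set w)" using card_inj_on_le[OF inj sub] by simp
  then show ?thesis by simp
qed

section \<open>The online algorithm on abstract states\<close>

text \<open>Positions are 1-based and 0 means "absent". The stack holds the intervals
  \<open>[ivl_lo s i, ivl_hi s i]\<close> for \<open>1 \<le> i \<le> height s\<close>; \<open>gap_of s x\<close> is the stack height when \<open>x\<close>
  was last read, and \<open>first_succ s x\<close> the letter following the first occurrence of \<open>x\<close>.\<close>

record ustate = amb_flag :: nat  pos :: nat  prev :: nat  height :: nat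
  last_pos :: "nat \<Rightarrow> nat"  first_pos :: "nat \<Rightarrow> nat"  first_succ :: "nat \<Rightarrow> nat"
  gap_of :: "nat \<Rightarrow> nat"  ivl_lo :: "nat \<Rightarrow> nat"  ivl_hi :: "nat \<Rightarrow> nat"

definition push_cover :: "ustate \<Rightarrow> nat \<Rightarrow> ustate" where
  "push_cover s u = (if pos s - 1 = 0 then s else
     let p = prev s; f = first_pos s p in
     if pos s - 1 \<le> f then s\<lparr>first_succ := (first_succ s)(p := u)\<rparr>
     else if first_succ s p = u then s
     else let hf = pop_merge (ivl_lo s) (ivl_hi s) (height s) f in
       s\<lparr>height := Suc (fst hf), ivl_lo := (ivl_lo s)(Suc (fst hf) := snd hf),
          ivl_hi := (ivl_hi s)(Suc (fst hf) := pos s - 1)\<rparr>)"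

definition record_char :: "ustate \<Rightarrow> nat \<Rightarrow> ustate" where
  "record_char s u = s\<lparr>last_pos := (last_pos s)(u := pos s), gap_of := (gap_of s)(u := height s), prev := u\<rparr>"

definition last_pos_covered :: "ustate \<Rightarrow> nat \<Rightarrow> bool" where
  "last_pos_covered s u = (let q = last_pos s u; hx = gap_of s u in
     \<not> hx \<le> height s \<or> (hx \<noteq> 0 \<and> q \<le> ivl_hi s hx) \<or> (Suc hx \<le> height s \<and> ivl_lo s (Suc hx) \<le> q))"

lemma last_pos_covered_iff:
  "last_pos_covered s u \<longleftrightarrow> \<not> gap_at (ivl_lo s) (ivl_hi s) (height s) (last_pos s u) (gap_of s u)"
  unfolding last_pos_covered_def gap_at_def Let_def by auto

definition check_char :: "ustate \<Rightarrow> nat \<Rightarrow> ustate" where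
  "check_char s u = (if last_pos s u = 0 then record_char (s\<lparr>first_pos := (first_pos s)(u := pos s)\<rparr>) u
     else if last_pos_covered s u then s\<lparr>amb_flag := 1\<rparr> else record_char s u)"

definition online_step :: "ustate \<Rightarrow> nat \<Rightarrow> ustate" where
  "online_step s u = (if amb_flag s = 0 then check_char (push_cover (s\<lparr>pos := Suc (pos s)\<rparr>) u) u else s)"

text \<open>The last clause makes the stack entries end at last occurrences of pairwise distinct letters,
  which bounds the stack height by the alphabet size.\<close>

definition represents :: "nat list \<Rightarrow> ustate \<Rightarrow> bool" where
  "represents w s \<longleftrightarrow> pos s = length w \<and> (w \<noteq> [] \<longrightarrow> prev s = w ! (length w - 1)) \<and>
  (\<forall>x. last_pos s x = 0 \<longrightarrow> x \<notin> set w) \<and>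
  (\<forall>x. last_pos s x \<noteq> 0 \<longrightarrow> last_pos s x \<le> length w \<and> w ! (last_pos s x - 1) = x \<and>
      (\<forall>i. last_pos s x \<le> i \<and> i < length w \<longrightarrow> w ! i \<noteq> x)) \<and>
  (\<forall>x\<in>set w. 0 < first_pos s x \<and> first_pos s x \<le> length w \<and> w ! (first_pos s x - 1) = x \<and>
      (\<forall>i. i < first_pos s x - 1 \<longrightarrow> w ! i \<noteq> x) \<and> (first_pos s x < length w \<longrightarrow> first_succ s x = w ! first_pos s x)) \<and>
  sorted_ivls (ivl_lo s) (ivl_hi s) (height s) \<and> (height s \<noteq> 0 \<longrightarrow> ivl_hi s (height s) < length w) \<and>
  (\<forall>q. in_ivls (ivl_lo s) (ivl_hi s) (height s) q \<longleftrightarrow> covered w q) \<and>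
  (\<forall>x. last_pos s x \<noteq> 0 \<longrightarrow> \<not> covered w (last_pos s x) \<longrightarrow> gap_at (ivl_lo s) (ivl_hi s) (height s) (last_pos s x) (gap_of s x)) \<and>
  (\<forall>i. 1 \<le> i \<and> i \<le> height s \<longrightarrow> last_pos s (w ! (ivl_hi s i - 1)) = ivl_hi s i)"

lemma representsD:
  assumes "represents w s"
  shows "pos s = length w" "w \<noteq> [] \<Longrightarrow> prev s = w ! (length w - 1)"
    "\<And>x. last_pos s x = 0 \<Longrightarrow> x \<notin> set w"
    "\<And>x. last_pos s x \<noteq> 0 \<Longrightarrow> last_pos s x \<le> length w"
    "\<And>x. last_pos s x \<noteq> 0 \<Longrightarrow> w ! (last_pos s x - 1) = x"
    "\<And>x i. last_pos s x \<noteq> 0 \<Longrightarrow> last_pos s x \<le> i \<Longrightarrow> i < length w \<Longrightarrow> w ! i \<noteq> x"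
    "\<And>x. x \<in> set w \<Longrightarrow> 0 < first_pos s x" "\<And>x. x \<in> set w \<Longrightarrow> first_pos s x \<le> length w"
    "\<And>x. x \<in> set w \<Longrightarrow> w ! (first_pos s x - 1) = x"
    "\<And>x i. x \<in> set w \<Longrightarrow> i < first_pos s x - 1 \<Longrightarrow> w ! i \<noteq> x"
    "\<And>x. x \<in> set w \<Longrightarrow> first_pos s x < length w \<Longrightarrow> first_succ s x = w ! first_pos s x"
    "sorted_ivls (ivl_lo s) (ivl_hi s) (height s)" "height s \<noteq> 0 \<Longrightarrow> ivl_hi s (height s) < length w"
    "\<And>q. in_ivls (ivl_lo s) (ivl_hi s) (height s) q \<longleftrightarrow> covered w q"
    "\<And>x. last_pos s x \<noteq> 0 \<Longrightarrow> \<not> covered w (last_pos s x) \<Longrightarrow> gap_at (ivl_lo s) (ivl_hi s) (height s) (last_pos s x) (gap_of s x)"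
    "\<And>i. 1 \<le> i \<Longrightarrow> i \<le> height s \<Longrightarrow> last_pos s (w ! (ivl_hi s i - 1)) = ivl_hi s i"
  using assms unfolding represents_def by blast+

lemma represents_last_pos_nonzero: "represents w s \<Longrightarrow> x \<in> set w \<Longrightarrow> last_pos s x \<noteq> 0"
  using representsD(3) by blast

lemma represents_last_pos_prev:
  assumes D: "represents w s" and ne: "w \<noteq> []"
  shows "last_pos s (w ! (length w - 1)) = length w"
proof -
  let ?p = "w ! (length w - 1)"
  have pin: "?p \<in> set w" using ne by simp
  then have L0: "last_pos s ?p \<noteq> 0" using represents_last_pos_nonzero[OF D] by simp
  have "last_pos s ?p \<le> length w" using representsD(4)[OF D L0] .
  moreover have "\<not> last_pos s ?p \<le> length w - 1"
    using representsD(6)[OF D L0, of "length w - 1"] ne by auto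
  ultimately show ?thesis by simp
qed

lemma represents_Nil_height: "represents [] s \<Longrightarrow> height s = 0"
proof (rule ccontr)
  assume D: "represents [] s" and "height s \<noteq> 0"
  then have "in_ivls (ivl_lo s) (ivl_hi s) (height s) (ivl_lo s 1)" unfolding in_ivls_def using representsD(12)[OF D]
    unfolding sorted_ivls_def by (intro exI[of _ 1]) auto
  then have "covered ([]::nat list) (ivl_lo s 1)" using representsD(14)[OF D] by simp
  then show False unfolding covered_def by simp
qed

lemma push_cover_props:
  fixes u :: nat
  assumes D: "represents w s" and na: "\<not> ambiguous w"
  defines "s2 \<equiv> push_cover (s\<lparr>pos := Suc (pos s)\<rparr>) u"
  shows "pos s2 = Suc (length w) \<and> prev s2 = prev s \<and> last_pos s2 = last_pos s \<and> first_pos s2 = first_pos s \<and> gap_of s2 = gap_of s \<and>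
    amb_flag s2 = amb_flag s \<and>
    (\<forall>x\<in>set w. first_pos s x < Suc (length w) \<longrightarrow> first_succ s2 x = (w @ [u]) ! first_pos s x) \<and>
    sorted_ivls (ivl_lo s2) (ivl_hi s2) (height s2) \<and> (height s2 \<noteq> 0 \<longrightarrow> ivl_hi s2 (height s2) \<le> length w) \<and>
    (\<forall>q. in_ivls (ivl_lo s2) (ivl_hi s2) (height s2) q \<longleftrightarrow> covered (w @ [u]) q) \<and>
    (\<forall>x. last_pos s x \<noteq> 0 \<longrightarrow> \<not> covered (w @ [u]) (last_pos s x) \<longrightarrow> gap_at (ivl_lo s2) (ivl_hi s2) (height s2) (last_pos s x) (gap_of s x)) \<and>
    (\<forall>i. 1 \<le> i \<and> i \<le> height s2 \<longrightarrow> last_pos s (w ! (ivl_hi s2 i - 1)) = ivl_hi s2 i) \<and>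
    height s2 \<le> card (set w)"
proof -
  define n where "n = length w"
  define s1 where "s1 = s\<lparr>pos := Suc (pos s)\<rparr>"
  have J: "pos s = n" using representsD(1)[OF D] n_def by simp
  have Hcard: "height s \<le> card (set w)"
    by (rule height_le_card[OF representsD(12)[OF D], where last_of = "last_pos s"]) (use representsD(13,16)[OF D] in auto)
  show ?thesis
  proof (cases "n = 0")
    case True
    then have w: "w = []" using n_def by simp
    have H0: "height s = 0" using represents_Nil_height D w by simp
    have e: "s2 = s1" unfolding s2_def s1_def push_cover_def using J True by simp
    have cv: "\<not> covered [u] q" for q unfolding covered_def by auto
    have cS: "\<not> in_ivls F C 0 q" for F C q unfolding in_ivls_def by auto
    have L0: "\<forall>x. last_pos s x = 0" using representsD(4)[OF D] w by fastforce
    show ?thesis unfolding e s1_def using H0 w cv cS representsD(12)[OF D] J True L0 by (simp add: gap_at_def)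
  next
    case False
    then have ne: "w \<noteq> []" using n_def by auto
    define p where "p = prev s"
    have p: "p = w ! (n - 1)" using representsD(2)[OF D ne] p_def n_def by simp
    have pin: "p \<in> set w" using p ne n_def by simp
    define f where "f = first_pos s p"
    have f: "0 < f" "f \<le> n" "w ! (f - 1) = p" "\<forall>i. i < f - 1 \<longrightarrow> w ! i \<noteq> p"
      using representsD(7,8,9,10)[OF D pin] f_def n_def by auto
    have NC: "(\<exists>a. a < n - 1 \<and> w ! a = w ! (n - 1) \<and> w ! Suc a \<noteq> u \<and> a < q \<and> q \<le> n) \<longleftrightarrow>
      (f - 1 < n - 1 \<and> w ! Suc (f - 1) \<noteq> u \<and> f - 1 < q \<and> q \<le> n)" for q
      using covered_snoc_first_occ[OF na ne, of "f - 1" u q] f p n_def by auto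
    have CW: "covered (w @ [u]) q \<longleftrightarrow> covered w q \<or> (f - 1 < n - 1 \<and> w ! Suc (f - 1) \<noteq> u \<and> f - 1 < q \<and> q \<le> n)" for q
      using covered_snoc[OF ne, of u q] NC[of q] n_def by simp
    have Lp: "last_pos s p = n" using represents_last_pos_prev[OF D ne] p n_def by simp
    have oldsucc: "first_succ s x = (w @ [u]) ! first_pos s x" if "x \<in> set w" "first_pos s x < n" for x
      using representsD(11)[OF D that(1)] that n_def by (simp add: nth_append)
    have first_n: "x = p" if "x \<in> set w" "first_pos s x = n" for x
      using representsD(9)[OF D that(1)] that(2) p by simp
    have succ_kept: "\<forall>x\<in>set w. first_pos s x < Suc n \<longrightarrow> first_succ s x = (w @ [u]) ! first_pos s x"
      if "\<not> n \<le> f"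
    proof (intro ballI impI)
      fix x assume x: "x \<in> set w" "first_pos s x < Suc n"
      have "first_pos s x \<noteq> n" using first_n[OF x(1)] that f_def by auto
      then show "first_succ s x = (w @ [u]) ! first_pos s x" using oldsucc[OF x(1)] x(2) by simp
    qed
    have CHn: "height s \<noteq> 0 \<longrightarrow> ivl_hi s (height s) < n" using representsD(13)[OF D] n_def by simp
    show ?thesis
    proof (cases "n \<le> f")
      case True
      then have fn: "f = n" using f by simp
      have e: "s2 = s1\<lparr>first_succ := (first_succ s)(p := u)\<rparr>" unfolding s2_def s1_def push_cover_def Let_def
        using J True False p_def f_def by simp
      have CW': "covered (w @ [u]) q \<longleftrightarrow> covered w q" for q using CW[of q] fn by auto
      have succ: "\<forall>x\<in>set w. first_pos s x < Suc n \<longrightarrow> ((first_succ s)(p := u)) x = (w @ [u]) ! first_pos s x"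
      proof (intro ballI impI)
        fix x assume x: "x \<in> set w" "first_pos s x < Suc n"
        show "((first_succ s)(p := u)) x = (w @ [u]) ! first_pos s x"
        proof (cases "x = p")
          case True then show ?thesis using fn f_def n_def by (simp add: nth_append)
        next
          case False
          then have "first_pos s x \<noteq> n" using first_n[OF x(1)] by auto
          then show ?thesis using oldsucc[OF x(1)] x False by simp
        qed
      qed
      show ?thesis unfolding e s1_def using representsD[OF D] CW' succ CHn Hcard n_def by auto
    next
      case fl: False
      show ?thesis
      proof (cases "first_succ s p = u")
        case True
        have e: "s2 = s1" unfolding s2_def s1_def push_cover_def Let_def
          using J False fl True p_def f_def by simp
        have ws: "w ! Suc (f - 1) = u" using representsD(11)[OF D pin] fl f True f_def n_def by simp
        have CW': "covered (w @ [u]) q \<longleftrightarrow> covered w q" for q using CW[of q] ws by auto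
        note succ = succ_kept[OF fl]
        show ?thesis unfolding e s1_def using representsD[OF D] CW' succ CHn Hcard n_def by auto
      next
        case su: False
        define h' where "h' = fst (pop_merge (ivl_lo s) (ivl_hi s) (height s) f)"
        define f' where "f' = snd (pop_merge (ivl_lo s) (ivl_hi s) (height s) f)"
        have e: "s2 = s1\<lparr>height := Suc h', ivl_lo := (ivl_lo s)(Suc h' := f'), ivl_hi := (ivl_hi s)(Suc h' := n)\<rparr>"
          unfolding s2_def s1_def push_cover_def Let_def h'_def f'_def
          using J False fl su p_def f_def by simp
        have ws: "w ! Suc (f - 1) \<noteq> u" using representsD(11)[OF D pin] fl f su f_def n_def by simp
        have CW': "covered (w @ [u]) q \<longleftrightarrow> covered w q \<or> (f \<le> q \<and> q \<le> n)" for q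
          using CW[of q] ws fl f by auto
        have S: "sorted_ivls (ivl_lo s) (ivl_hi s) (height s)" by (rule representsD(12)[OF D])
        have f1: "1 \<le> f" using f(1) by simp
        note sorted' = sorted_ivls_push_merged[OF S f1 f(2), folded h'_def f'_def]
        note in_ivls' = in_ivls_push_merged[OF S CHn, of f, folded h'_def f'_def]
        note gap_at' = gap_at_push_merged[OF S, of _ n _ f, folded h'_def f'_def]
        have "h' \<le> height s" unfolding h'_def by (rule pop_merge_fst_le)
        have covS2: "\<forall>q. in_ivls ((ivl_lo s)(Suc h' := f')) ((ivl_hi s)(Suc h' := n)) (Suc h') q \<longleftrightarrow> covered (w @ [u]) q"
          using in_ivls' CW' representsD(14)[OF D] by auto
        have T2: "\<forall>x. last_pos s x \<noteq> 0 \<longrightarrow> \<not> covered (w @ [u]) (last_pos s x) \<longrightarrow>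
            gap_at ((ivl_lo s)(Suc h' := f')) ((ivl_hi s)(Suc h' := n)) (Suc h') (last_pos s x) (gap_of s x)"
        proof (intro allI impI)
          fix x assume x: "last_pos s x \<noteq> 0" "\<not> covered (w @ [u]) (last_pos s x)"
          have "\<not> covered w (last_pos s x)" using CW' x(2) by auto
          then have T: "gap_at (ivl_lo s) (ivl_hi s) (height s) (last_pos s x) (gap_of s x)" using representsD(15)[OF D x(1)] by simp
          have "last_pos s x \<le> n" using representsD(4)[OF D x(1)] n_def by simp
          then show "gap_at ((ivl_lo s)(Suc h' := f')) ((ivl_hi s)(Suc h' := n)) (Suc h') (last_pos s x) (gap_of s x)"
            using gap_at' T x(2) covS2 by blast
        qed
        have D9: "\<forall>i. 1 \<le> i \<and> i \<le> Suc h' \<longrightarrow> last_pos s (w ! (((ivl_hi s)(Suc h' := n)) i - 1)) = ((ivl_hi s)(Suc h' := n)) i"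
        proof (intro allI impI)
          fix i assume i: "1 \<le> i \<and> i \<le> Suc h'"
          show "last_pos s (w ! (((ivl_hi s)(Suc h' := n)) i - 1)) = ((ivl_hi s)(Suc h' := n)) i"
          proof (cases "i = Suc h'")
            case True then show ?thesis using Lp p by simp
          next
            case False
            then have "i \<le> height s" using i \<open>h' \<le> height s\<close> by auto
            then show ?thesis using representsD(16)[OF D] i False by auto
          qed
        qed
        have Hc: "Suc h' \<le> card (set w)"
          by (rule height_le_card[OF sorted', where last_of = "last_pos s"]) (use D9 n_def in auto)
        note succ = succ_kept[OF fl]
        show ?thesis unfolding e s1_def using covS2 T2 D9 Hc sorted' succ n_def J
          by simp
      qed
    qed
  qed
qed

lemma represents_record_char:
  fixes u :: nat and w :: "nat list"
  assumes D: "represents w s"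
    and P: "sorted_ivls (ivl_lo r) (ivl_hi r) (height r)" "height r \<noteq> 0 \<longrightarrow> ivl_hi r (height r) \<le> length w"
      "\<forall>x\<in>set w. first_pos s x < Suc (length w) \<longrightarrow> first_succ r x = (w @ [u]) ! first_pos s x"
      "\<forall>q. in_ivls (ivl_lo r) (ivl_hi r) (height r) q \<longleftrightarrow> covered (w @ [u]) q"
      "\<forall>x. last_pos s x \<noteq> 0 \<longrightarrow> \<not> covered (w @ [u]) (last_pos s x) \<longrightarrow> gap_at (ivl_lo r) (ivl_hi r) (height r) (last_pos s x) (gap_of s x)"
      "\<forall>i. 1 \<le> i \<and> i \<le> height r \<longrightarrow> last_pos s (w ! (ivl_hi r i - 1)) = ivl_hi r i"
    and t: "pos t = Suc (length w)" "last_pos t = last_pos s" "gap_of t = gap_of s" "first_succ t = first_succ r"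
      "ivl_lo t = ivl_lo r" "ivl_hi t = ivl_hi r" "height t = height r"
    and first: "\<forall>x\<in>set w. first_pos t x = first_pos s x" "u \<notin> set w \<Longrightarrow> first_pos t u = Suc (length w)"
    and ok: "last_pos s u \<noteq> 0 \<Longrightarrow> \<not> covered (w @ [u]) (last_pos s u)"
  shows "represents (w @ [u]) (record_char t u)"
proof -
  define n where "n = length w"
  define w' where "w' = w @ [u]"
  have nth': "w' ! i = w ! i" if "i < n" for i using that unfolding w'_def n_def by (simp add: nth_append)
  have nthn: "w' ! n = u" unfolding w'_def n_def by simp
  have lw': "length w' = Suc n" unfolding w'_def n_def by simp
  let ?L = "(last_pos s)(u := Suc n)"
  have uL: "last_pos (record_char t u) = ?L" unfolding record_char_def using t n_def by simp
  have Cle: "ivl_hi r i \<le> n" "1 \<le> ivl_hi r i" if "1 \<le> i" "i \<le> height r" for i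
  proof -
    show "ivl_hi r i \<le> n" using sorted_ivls_hi_mono[OF P(1) that(1,2) order.refl] P(2) that n_def by auto
    show "1 \<le> ivl_hi r i" using P(1) that unfolding sorted_ivls_def by fastforce
  qed
  have c1: "pos (record_char t u) = length w'" using t lw' n_def unfolding record_char_def by simp
  have c2: "w' \<noteq> [] \<longrightarrow> prev (record_char t u) = w' ! (length w' - 1)" using nthn lw' unfolding record_char_def by simp
  have c3: "\<forall>x. last_pos (record_char t u) x = 0 \<longrightarrow> x \<notin> set w'"
  proof (intro allI impI)
    fix x assume "last_pos (record_char t u) x = 0"
    then have "x \<noteq> u" "last_pos s x = 0" using uL by (auto split: if_splits)
    then show "x \<notin> set w'" using representsD(3)[OF D] unfolding w'_def by auto
  qed
  have c4: "\<forall>x. last_pos (record_char t u) x \<noteq> 0 \<longrightarrow> last_pos (record_char t u) x \<le> length w' \<and> w' ! (last_pos (record_char t u) x - 1) = x \<and>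
      (\<forall>i. last_pos (record_char t u) x \<le> i \<and> i < length w' \<longrightarrow> w' ! i \<noteq> x)"
  proof (intro allI impI)
    fix x assume x: "last_pos (record_char t u) x \<noteq> 0"
    show "last_pos (record_char t u) x \<le> length w' \<and> w' ! (last_pos (record_char t u) x - 1) = x \<and>
      (\<forall>i. last_pos (record_char t u) x \<le> i \<and> i < length w' \<longrightarrow> w' ! i \<noteq> x)"
    proof (cases "x = u")
      case True then show ?thesis using uL nthn lw' by auto
    next
      case False
      then have L: "last_pos s x \<noteq> 0" "last_pos (record_char t u) x = last_pos s x" using x uL by auto
      have a: "last_pos s x \<le> n" using representsD(4)[OF D L(1)] n_def by simp
      have b: "w' ! (last_pos s x - 1) = x" using representsD(5)[OF D L(1)] nth' a L(1) by simp
      have c: "\<forall>i. last_pos s x \<le> i \<and> i < length w' \<longrightarrow> w' ! i \<noteq> x"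
      proof (intro allI impI)
        fix i assume i: "last_pos s x \<le> i \<and> i < length w'"
        show "w' ! i \<noteq> x"
        proof (cases "i < n")
          case True then show ?thesis using representsD(6)[OF D L(1)] i nth' n_def by simp
        next
          case False then have "i = n" using i lw' by simp
          then show ?thesis using nthn False \<open>x \<noteq> u\<close> by simp
        qed
      qed
      show ?thesis using a b c L(2) lw' by simp
    qed
  qed
  have c5: "\<forall>x\<in>set w'. 0 < first_pos (record_char t u) x \<and> first_pos (record_char t u) x \<le> length w' \<and> w' ! (first_pos (record_char t u) x - 1) = x \<and>
      (\<forall>i. i < first_pos (record_char t u) x - 1 \<longrightarrow> w' ! i \<noteq> x) \<and> (first_pos (record_char t u) x < length w' \<longrightarrow> first_succ (record_char t u) x = w' ! first_pos (record_char t u) x)"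
  proof
    fix x assume xw: "x \<in> set w'"
    have fu: "first_pos (record_char t u) = first_pos t" "first_succ (record_char t u) = first_succ r" unfolding record_char_def using t by auto
    show "0 < first_pos (record_char t u) x \<and> first_pos (record_char t u) x \<le> length w' \<and> w' ! (first_pos (record_char t u) x - 1) = x \<and>
      (\<forall>i. i < first_pos (record_char t u) x - 1 \<longrightarrow> w' ! i \<noteq> x) \<and> (first_pos (record_char t u) x < length w' \<longrightarrow> first_succ (record_char t u) x = w' ! first_pos (record_char t u) x)"
    proof (cases "x \<in> set w")
      case True
      have f: "first_pos (record_char t u) x = first_pos s x" using first(1) True fu by simp
      have a: "0 < first_pos s x" "first_pos s x \<le> n" using representsD(7,8)[OF D True] n_def by auto
      have b: "w' ! (first_pos s x - 1) = x" using representsD(9)[OF D True] nth' a by simp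
      have c: "\<forall>i. i < first_pos s x - 1 \<longrightarrow> w' ! i \<noteq> x" using representsD(10)[OF D True] nth' a by auto
      have d: "first_pos s x < length w' \<longrightarrow> first_succ r x = w' ! first_pos s x" using P(3) True lw' n_def w'_def by simp
      show ?thesis using f a b c d fu lw' by simp
    next
      case False
      then have xu: "x = u" using xw unfolding w'_def by simp
      have f: "first_pos (record_char t u) x = Suc n" using first(2) False xu fu n_def by simp
      have c: "\<forall>i. i < n \<longrightarrow> w' ! i \<noteq> x" using False nth' n_def by (metis nth_mem)
      show ?thesis using f c nthn xu lw' by simp
    qed
  qed
  have st: "ivl_lo (record_char t u) = ivl_lo r" "ivl_hi (record_char t u) = ivl_hi r" "height (record_char t u) = height r" "gap_of (record_char t u) = (gap_of s)(u := height r)"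
    unfolding record_char_def using t by auto
  have c6: "sorted_ivls (ivl_lo (record_char t u)) (ivl_hi (record_char t u)) (height (record_char t u))" using P(1) st by simp
  have c7: "height (record_char t u) \<noteq> 0 \<longrightarrow> ivl_hi (record_char t u) (height (record_char t u)) < length w'" using P(2) st lw' n_def by auto
  have c8: "\<forall>q. in_ivls (ivl_lo (record_char t u)) (ivl_hi (record_char t u)) (height (record_char t u)) q \<longleftrightarrow> covered w' q" using P(4) st w'_def by simp
  have c9: "\<forall>x. last_pos (record_char t u) x \<noteq> 0 \<longrightarrow> \<not> covered w' (last_pos (record_char t u) x) \<longrightarrow>
      gap_at (ivl_lo (record_char t u)) (ivl_hi (record_char t u)) (height (record_char t u)) (last_pos (record_char t u) x) (gap_of (record_char t u) x)"
  proof (intro allI impI)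
    fix x assume x: "last_pos (record_char t u) x \<noteq> 0" "\<not> covered w' (last_pos (record_char t u) x)"
    show "gap_at (ivl_lo (record_char t u)) (ivl_hi (record_char t u)) (height (record_char t u)) (last_pos (record_char t u) x) (gap_of (record_char t u) x)"
    proof (cases "x = u")
      case True then show ?thesis using st uL P(2) n_def unfolding gap_at_def by auto
    next
      case False then show ?thesis using st uL x P(5) w'_def by auto
    qed
  qed
  have c10: "\<forall>i. 1 \<le> i \<and> i \<le> height (record_char t u) \<longrightarrow> last_pos (record_char t u) (w' ! (ivl_hi (record_char t u) i - 1)) = ivl_hi (record_char t u) i"
  proof (intro allI impI)
    fix i assume i: "1 \<le> i \<and> i \<le> height (record_char t u)"
    then have i2: "1 \<le> i" "i \<le> height r" using st by auto
    have y: "w' ! (ivl_hi r i - 1) = w ! (ivl_hi r i - 1)" using nth' Cle[OF i2] by simp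
    have Ly: "last_pos s (w ! (ivl_hi r i - 1)) = ivl_hi r i" using P(6) i2 by auto
    have ne: "w ! (ivl_hi r i - 1) \<noteq> u"
    proof
      assume e: "w ! (ivl_hi r i - 1) = u"
      then have Lu: "last_pos s u = ivl_hi r i" using Ly by simp
      then have "last_pos s u \<noteq> 0" using Cle[OF i2] by simp
      then have "\<not> covered (w @ [u]) (ivl_hi r i)" using ok Lu by simp
      moreover have "in_ivls (ivl_lo r) (ivl_hi r) (height r) (ivl_hi r i)" unfolding in_ivls_def using i2 P(1) unfolding sorted_ivls_def
        by (intro exI[of _ i]) auto
      ultimately show False using P(4) by simp
    qed
    show "last_pos (record_char t u) (w' ! (ivl_hi (record_char t u) i - 1)) = ivl_hi (record_char t u) i"
      using uL st y Ly ne by simp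
  qed
  show ?thesis unfolding represents_def w'_def[symmetric]
    using c1 c2 c3 c4 c5 c6 c7 c8 c9 c10 by blast
qed

lemma online_step_correct:
  fixes u :: nat
  assumes D: "represents w s" and na: "\<not> ambiguous w" and a0: "amb_flag s = 0"
  shows "(amb_flag (online_step s u) \<noteq> 0 \<longleftrightarrow> ambiguous (w @ [u])) \<and> (amb_flag (online_step s u) = 0 \<longrightarrow> represents (w @ [u]) (online_step s u)) \<and>
    height (push_cover (s\<lparr>pos := Suc (pos s)\<rparr>) u) \<le> card (set w) \<and> height (online_step s u) = height (push_cover (s\<lparr>pos := Suc (pos s)\<rparr>) u)"
proof -
  define s2 where "s2 = push_cover (s\<lparr>pos := Suc (pos s)\<rparr>) u"
  note P = push_cover_props[OF D na, of u, folded s2_def]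
  have ab: "online_step s u = check_char s2 u" unfolding online_step_def s2_def using a0 by simp
  have Hq: "height (check_char s2 u) = height s2" unfolding check_char_def record_char_def by simp
  show ?thesis
  proof (cases "last_pos s u = 0")
    case True
    then have un: "u \<notin> set w" using represents_last_pos_nonzero[OF D] by blast
    let ?t = "s2\<lparr>first_pos := (first_pos s2)(u := pos s2)\<rparr>"
    have q: "check_char s2 u = record_char ?t u" unfolding check_char_def using True P by simp
    have "represents (w @ [u]) (record_char ?t u)"
      by (rule represents_record_char[OF D, where r=s2]) (use P True un in auto)
    moreover have "amb_flag (record_char ?t u) = 0" using P a0 unfolding record_char_def by simp
    moreover have "\<not> ambiguous (w @ [u])" by (rule not_ambiguous_snoc_fresh[OF na un])
    ultimately show ?thesis unfolding ab q[symmetric] using Hq P s2_def by simp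
  next
    case False
    define L where "L = last_pos s u"
    have Lw: "L \<le> length w" "w ! (L - 1) = u" "\<forall>i. L \<le> i \<and> i < length w \<longrightarrow> w ! i \<noteq> u"
      using representsD(4,5,6)[OF D False] unfolding L_def by auto
    have L0: "L \<noteq> 0" using False L_def by simp
    have l1: "L - 1 < length w" using Lw(1) L0 by simp
    have l3: "\<forall>i. L - 1 < i \<and> i < length w \<longrightarrow> w ! i \<noteq> u"
    proof (intro allI impI)
      fix i assume "L - 1 < i \<and> i < length w"
      then have "L \<le> i \<and> i < length w" using L0 by auto
      then show "w ! i \<noteq> u" using Lw(3) by blast
    qed
    have uin: "u \<in> set w" using Lw(2) l1 nth_mem by metis
    have am: "ambiguous (w @ [u]) \<longleftrightarrow> covered (w @ [u]) L"
      using ambiguous_snoc_iff_covered[OF na l1 Lw(2) l3] L0 by simp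
    have S: "sorted_ivls (ivl_lo s2) (ivl_hi s2) (height s2)" using P by blast
    have "\<not> in_ivls (ivl_lo s2) (ivl_hi s2) (height s2) L \<Longrightarrow> gap_at (ivl_lo s2) (ivl_hi s2) (height s2) L (gap_of s u)"
      using P L0 unfolding L_def by blast
    then have dd: "last_pos_covered s2 u \<longleftrightarrow> in_ivls (ivl_lo s2) (ivl_hi s2) (height s2) L"
      using in_ivls_iff_not_gap_at[OF S] last_pos_covered_iff[of s2 u] P unfolding L_def by simp
    have cv: "ambiguous (w @ [u]) \<longleftrightarrow> last_pos_covered s2 u" using am dd P by blast
    show ?thesis
    proof (cases "last_pos_covered s2 u")
      case True
      have q: "check_char s2 u = s2\<lparr>amb_flag := 1\<rparr>" unfolding check_char_def using True False P by simp
      show ?thesis unfolding ab q using cv True P s2_def by simp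
    next
      case nd: False
      have q: "check_char s2 u = record_char s2 u" unfolding check_char_def using nd False P by simp
      have ok: "\<not> covered (w @ [u]) (last_pos s u)" using cv nd am L_def by simp
      have "represents (w @ [u]) (record_char s2 u)"
        by (rule represents_record_char[OF D, where r=s2]) (use P ok uin in auto)
      moreover have "amb_flag (record_char s2 u) = 0" using P a0 unfolding record_char_def by simp
      ultimately show ?thesis unfolding ab q using cv nd Hq P s2_def q by simp
    qed
  qed
qed

definition state_range :: "nat \<Rightarrow> ustate \<Rightarrow> bool" where
  "state_range k s \<longleftrightarrow> amb_flag s \<le> 1 \<and> height s \<le> k \<and> prev s \<le> k \<and>
    (\<forall>y. last_pos s y \<le> pos s \<and> first_pos s y \<le> pos s \<and> first_succ s y \<le> k \<and> gap_of s y \<le> k \<and> ivl_lo s y \<le> pos s \<and> ivl_hi s y \<le> pos s)"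

lemma state_range_push_cover:
  assumes B: "state_range k s" and u: "u < k" and H: "height (push_cover (s\<lparr>pos := Suc (pos s)\<rparr>) u) \<le> k"
  shows "state_range k (push_cover (s\<lparr>pos := Suc (pos s)\<rparr>) u) \<and> pos (push_cover (s\<lparr>pos := Suc (pos s)\<rparr>) u) = Suc (pos s) \<and>
    amb_flag (push_cover (s\<lparr>pos := Suc (pos s)\<rparr>) u) = amb_flag s"
proof -
  have FV: "\<forall>y\<le>height s. ivl_lo s y \<le> Suc (pos s)" using B unfolding state_range_def by (auto intro: le_SucI)
  have fV: "first_pos s (prev s) \<le> Suc (pos s)" using B unfolding state_range_def by (auto intro: le_SucI)
  have m: "snd (pop_merge (ivl_lo s) (ivl_hi s) (height s) (first_pos s (prev s))) \<le> Suc (pos s)"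
    by (rule pop_merge_snd_le[OF FV fV])
  show ?thesis using B u H m unfolding push_cover_def Let_def state_range_def
    by (auto split: if_splits intro: le_SucI)
qed

lemma state_range_check_char:
  assumes B: "state_range k s" and u: "u < k"
  shows "state_range k (check_char s u) \<and> pos (check_char s u) = pos s \<and> height (check_char s u) = height s"
  using B u unfolding check_char_def record_char_def state_range_def by auto

lemma state_range_online_step:
  assumes B: "state_range k s" and u: "u < k" and H: "amb_flag s = 0 \<Longrightarrow> height (push_cover (s\<lparr>pos := Suc (pos s)\<rparr>) u) \<le> k"
  shows "state_range k (online_step s u)"
proof (cases "amb_flag s = 0")
  case True
  then show ?thesis unfolding online_step_def using state_range_push_cover[OF B u H[OF True]] state_range_check_char u by simp
next
  case False then show ?thesis unfolding online_step_def using B by simp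
qed

definition stream_inv :: "nat \<Rightarrow> nat list \<Rightarrow> ustate \<Rightarrow> bool" where
  "stream_inv k v s \<longleftrightarrow> state_range k s \<and> pos s \<le> length v \<and> (amb_flag s \<noteq> 0 \<longleftrightarrow> ambiguous v) \<and> (amb_flag s = 0 \<longrightarrow> represents v s)"

lemma height_online_step: "height (online_step s u) \<le> Suc (height s)"
proof (cases "amb_flag s = 0")
  case True
  have "height (push_cover (s\<lparr>pos := Suc (pos s)\<rparr>) u) \<le> Suc (height s)"
    unfolding push_cover_def Let_def using pop_merge_fst_le by (auto split: if_splits)
  then show ?thesis unfolding online_step_def check_char_def record_char_def using True by simp
next
  case False then show ?thesis unfolding online_step_def by simp
qed

lemma stream_inv_online_step:
  assumes I: "stream_inv k v s" and u: "u < k" and sv: "set v \<subseteq> {..<k}"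
  shows "stream_inv k (v @ [u]) (online_step s u) \<and> (amb_flag s = 0 \<longrightarrow> height (push_cover (s\<lparr>pos := Suc (pos s)\<rparr>) u) \<le> k)"
proof (cases "amb_flag s = 0")
  case True
  have D: "represents v s" and na: "\<not> ambiguous v" and B: "state_range k s" using I True unfolding stream_inv_def by auto
  note SC = online_step_correct[OF D na True, of u]
  have "card (set v) \<le> k" using card_mono[OF _ sv] by simp
  then have Hk: "height (push_cover (s\<lparr>pos := Suc (pos s)\<rparr>) u) \<le> k" using SC by simp
  have B': "state_range k (online_step s u)" by (rule state_range_online_step[OF B u Hk])
  have J: "pos (online_step s u) \<le> length (v @ [u])"
    using state_range_push_cover[OF B u Hk] state_range_check_char[of k _ u] u representsD(1)[OF D] True unfolding online_step_def
    by auto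
  show ?thesis unfolding stream_inv_def using B' J SC Hk by auto
next
  case False
  then have "ambiguous v" using I unfolding stream_inv_def by simp
  then have "ambiguous (v @ [u])" by (rule ambiguous_snoc)
  then show ?thesis using I False unfolding stream_inv_def online_step_def by auto
qed

definition init_state :: ustate where
  "init_state = \<lparr>amb_flag = 0, pos = 0, prev = 0, height = 0, last_pos = \<lambda>_. 0, first_pos = \<lambda>_. 0, first_succ = \<lambda>_. 0,
     gap_of = \<lambda>_. 0, ivl_lo = \<lambda>_. 0, ivl_hi = \<lambda>_. 0\<rparr>"

lemma stream_inv_init: "stream_inv k [] init_state"
  unfolding stream_inv_def state_range_def represents_def init_state_def ambiguous_def covered_def in_ivls_def sorted_ivls_def by simp

section \<open>Total correctness on the RAM\<close>

definition bounded_by :: "nat \<Rightarrow> (nat \<Rightarrow> nat) \<Rightarrow> bool" where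
  "bounded_by V m \<longleftrightarrow> (\<forall>a. m a \<le> V)"

lemma bounded_by_upd[simp]: "bounded_by V m \<Longrightarrow> v \<le> V \<Longrightarrow> bounded_by V (m(a := v))"
  unfolding bounded_by_def by auto

definition reaches :: "instr list \<Rightarrow> nat \<Rightarrow> nat \<Rightarrow> config \<Rightarrow> nat \<Rightarrow> config \<Rightarrow> bool" where
  "reaches P S V c0 t c1 \<longleftrightarrow> (step P ^^ t) c0 = c1 \<and>
     (\<forall>i<t. fst ((step P ^^ i) c0) < length P \<and>
        touched (P ! fst ((step P ^^ i) c0)) (snd ((step P ^^ i) c0)) \<subseteq> {..<S}) \<and>
     (\<forall>i\<le>t. bounded_by V (snd ((step P ^^ i) c0)))"

lemma reaches_0: "bounded_by V m \<Longrightarrow> reaches P S V (pc, m) 0 (pc, m)"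
  unfolding reaches_def by auto

lemma reaches_Suc:
  assumes "pc < length P" "touched (P ! pc) m \<subseteq> {..<S}" "bounded_by V m"
    "reaches P S V (exec_instr (P ! pc) (pc, m)) t c"
  shows "reaches P S V (pc, m) (Suc t) c"
proof -
  have st: "step P (pc, m) = exec_instr (P ! pc) (pc, m)" using assms(1) by (simp add: step_def)
  have fp: "(step P ^^ Suc i) (pc, m) = (step P ^^ i) (exec_instr (P ! pc) (pc, m))" for i
    by (simp only: funpow_Suc_right comp_apply st)
  have A: "(step P ^^ Suc t) (pc, m) = c" using assms(4) fp unfolding reaches_def by simp
  have B: "\<forall>i<Suc t. fst ((step P ^^ i) (pc, m)) < length P \<and>
        touched (P ! fst ((step P ^^ i) (pc, m))) (snd ((step P ^^ i) (pc, m))) \<subseteq> {..<S}"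
  proof (intro allI impI)
    fix i assume "i < Suc t"
    then show "fst ((step P ^^ i) (pc, m)) < length P \<and>
        touched (P ! fst ((step P ^^ i) (pc, m))) (snd ((step P ^^ i) (pc, m))) \<subseteq> {..<S}"
      using assms(1,2,4) fp unfolding reaches_def by (cases i) auto
  qed
  have C: "\<forall>i\<le>Suc t. bounded_by V (snd ((step P ^^ i) (pc, m)))"
  proof (intro allI impI)
    fix i assume "i \<le> Suc t"
    then show "bounded_by V (snd ((step P ^^ i) (pc, m)))"
      using assms(3,4) fp unfolding reaches_def by (cases i) auto
  qed
  show ?thesis unfolding reaches_def using A B C by blast
qed

lemma reaches_trans: "reaches P S V c0 t1 c1 \<Longrightarrow> reaches P S V c1 t2 c2 \<Longrightarrow> reaches P S V c0 (t1 + t2) c2"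
proof (induction t1 arbitrary: c0)
  case 0 then show ?case unfolding reaches_def by auto
next
  case (Suc t1)
  obtain pc m where c0: "c0 = (pc, m)" by fastforce
  have r: "reaches P S V c0 (Suc t1) c1" by fact
  have A: "\<forall>i<Suc t1. fst ((step P ^^ i) (pc, m)) < length P \<and>
        touched (P ! fst ((step P ^^ i) (pc, m))) (snd ((step P ^^ i) (pc, m))) \<subseteq> {..<S}"
    and B: "\<forall>i\<le>Suc t1. bounded_by V (snd ((step P ^^ i) (pc, m)))"
    and Cc: "(step P ^^ Suc t1) (pc, m) = c1"
    using r unfolding reaches_def c0 by auto
  have pc: "pc < length P" "touched (P ! pc) m \<subseteq> {..<S}" "bounded_by V m"
    using A[rule_format, of 0] B[rule_format, of 0] by auto
  have st: "step P (pc, m) = exec_instr (P ! pc) (pc, m)" using pc(1) by (simp add: step_def)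
  have fp: "(step P ^^ Suc i) (pc, m) = (step P ^^ i) (exec_instr (P ! pc) (pc, m))" for i
    by (simp only: funpow_Suc_right comp_apply st)
  have "reaches P S V (exec_instr (P ! pc) (pc, m)) t1 c1"
    unfolding reaches_def
  proof (intro conjI allI impI)
    show "(step P ^^ t1) (exec_instr (P ! pc) (pc, m)) = c1" using Cc fp by simp
  next
    fix i assume "i < t1"
    then show "fst ((step P ^^ i) (exec_instr (P ! pc) (pc, m))) < length P"
      using A[rule_format, of "Suc i"] fp by simp
  next
    fix i assume "i < t1"
    then show "touched (P ! fst ((step P ^^ i) (exec_instr (P ! pc) (pc, m))))
          (snd ((step P ^^ i) (exec_instr (P ! pc) (pc, m)))) \<subseteq> {..<S}"
      using A[rule_format, of "Suc i"] fp by simp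
  next
    fix i assume "i \<le> t1"
    then show "bounded_by V (snd ((step P ^^ i) (exec_instr (P ! pc) (pc, m))))"
      using B[rule_format, of "Suc i"] fp by simp
  qed
  from Suc.IH[OF this Suc.prems(2)] have "reaches P S V (exec_instr (P ! pc) (pc, m)) (t1 + t2) c2" .
  then show ?case using reaches_Suc[OF pc] c0 by simp
qed

definition wp :: "instr list \<Rightarrow> nat \<Rightarrow> nat \<Rightarrow> nat \<Rightarrow> (nat \<Rightarrow> nat) \<Rightarrow> (nat \<Rightarrow> (nat \<Rightarrow> nat) \<Rightarrow> bool) \<Rightarrow> bool" where
  "wp P S V pc m Q \<longleftrightarrow> (\<exists>t pc' m'. reaches P S V (pc, m) t (pc', m') \<and> length P \<le> pc' \<and> Q t m')"

lemma wp_halt: "length P \<le> pc \<Longrightarrow> bounded_by V m \<Longrightarrow> Q 0 m \<Longrightarrow> wp P S V pc m Q"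
  unfolding wp_def using reaches_0 by blast

lemma wp_step:
  assumes "pc < length P" "touched (P ! pc) m \<subseteq> {..<S}" "bounded_by V m"
    "wp P S V (fst (exec_instr (P ! pc) (pc, m))) (snd (exec_instr (P ! pc) (pc, m))) (\<lambda>t. Q (Suc t))"
  shows "wp P S V pc m Q"
proof -
  obtain t pc' m' where r: "reaches P S V (exec_instr (P ! pc) (pc, m)) t (pc', m')" "length P \<le> pc'" "Q (Suc t) m'"
    using assms(4) unfolding wp_def by auto
  then show ?thesis unfolding wp_def using reaches_Suc[OF assms(1-3) r(1)] by blast
qed

lemma wp_unfold:
  assumes "if pc < length P then touched (P ! pc) m \<subseteq> {..<S} \<and> bounded_by V m \<and>
    wp P S V (fst (exec_instr (P ! pc) (pc, m))) (snd (exec_instr (P ! pc) (pc, m))) (\<lambda>t. Q (Suc t))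
    else bounded_by V m \<and> Q 0 m"
  shows "wp P S V pc m Q"
  using assms wp_step[of pc P m S V Q] wp_halt[of P pc V m Q S] by (auto split: if_splits)

lemma wp_mono: "wp P S V pc m Q \<Longrightarrow> (\<And>t m. Q t m \<Longrightarrow> R t m) \<Longrightarrow> wp P S V pc m R"
  unfolding wp_def by blast

lemma halts_unique: "halts_in P m t1 \<Longrightarrow> halts_in P m t2 \<Longrightarrow> t1 = t2"
  unfolding halts_in_def by (metis linorder_neqE_nat not_le)

lemma run_wp:
  assumes "wp P S V 0 m Q"
  shows "\<exists>t m'. run P S V m = Some (t, m') \<and> Q t m'"
proof -
  obtain t pc' m' where r: "reaches P S V (0, m) t (pc', m')" "length P \<le> pc'" "Q t m'"
    using assms unfolding wp_def by auto
  have h: "halts_in P m t" using r unfolding reaches_def halts_in_def cfg_at_def by auto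
  have w: "within P S V m t" using r unfolding reaches_def within_def cfg_at_def bounded_by_def by auto
  have th: "(THE t. halts_in P m t) = t" using h halts_unique by blast
  have "run P S V m = Some (t, m')" unfolding run_def using h w th r(1)
    unfolding reaches_def cfg_at_def by (auto simp: Let_def)
  then show ?thesis using r by blast
qed

definition wp_to :: "instr list \<Rightarrow> nat \<Rightarrow> nat \<Rightarrow> nat set \<Rightarrow> nat \<Rightarrow> (nat \<Rightarrow> nat) \<Rightarrow> (nat \<Rightarrow> nat \<Rightarrow> (nat \<Rightarrow> nat) \<Rightarrow> bool) \<Rightarrow> bool" where
  "wp_to P S V stops pc m R \<longleftrightarrow> (\<exists>t pc' m'. reaches P S V (pc, m) t (pc', m') \<and> pc' \<in> stops \<and> R t pc' m')"

lemma wp_to_stop: "pc \<in> stops \<Longrightarrow> bounded_by V m \<Longrightarrow> R 0 pc m \<Longrightarrow> wp_to P S V stops pc m R"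
  unfolding wp_to_def using reaches_0 by blast

lemma wp_to_first:
  assumes "pc < length P \<and> touched (P ! pc) m \<subseteq> {..<S} \<and> bounded_by V m \<and>
    wp_to P S V stops (fst (exec_instr (P ! pc) (pc, m))) (snd (exec_instr (P ! pc) (pc, m))) (\<lambda>t. R (Suc t))"
  shows "wp_to P S V stops pc m R"
  using assms reaches_Suc[of pc P m S V] unfolding wp_to_def by fastforce

lemma wp_to_unfold:
  assumes "if pc \<in> stops then bounded_by V m \<and> R 0 pc m else pc < length P \<and> touched (P ! pc) m \<subseteq> {..<S} \<and> bounded_by V m \<and>
    wp_to P S V stops (fst (exec_instr (P ! pc) (pc, m))) (snd (exec_instr (P ! pc) (pc, m))) (\<lambda>t. R (Suc t))"
  shows "wp_to P S V stops pc m R"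
  using assms wp_to_first[of pc P m S V stops R] wp_to_stop[of pc stops V m R P S] by (auto split: if_splits)

lemma wp_to_wp:
  assumes "wp_to P S V stops pc m R"
    "\<And>t pc' m'. pc' \<in> stops \<Longrightarrow> R t pc' m' \<Longrightarrow> wp P S V pc' m' (\<lambda>t'. Q (t + t'))"
  shows "wp P S V pc m Q"
proof -
  obtain t pc' m' where r: "reaches P S V (pc, m) t (pc', m')" "pc' \<in> stops" "R t pc' m'"
    using assms(1) unfolding wp_to_def by auto
  obtain t2 pc2 m2 where r2: "reaches P S V (pc', m') t2 (pc2, m2)" "length P \<le> pc2" "Q (t + t2) m2"
    using assms(2)[OF r(2,3)] unfolding wp_def by auto
  show ?thesis unfolding wp_def using reaches_trans[OF r(1) r2(1)] r2 by blast
qed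

section \<open>The program and its memory layout\<close>

text \<open>Instructions 2--69 of \<open>Pstep\<close> implement \<open>push_cover\<close>, with the \<open>pop_merge\<close> loop at 26--50,
  instructions 70--126 implement \<open>check_char\<close>, and 127--137 clear the scratch registers.\<close>

definition Pstep :: "instr list" where
  "Pstep = [
  Jz 2 2,
  Jmp 127,
  LoadC 7 1,
  Add 3 3 7,
  Sub 13 3 7,
  Jz 13 70,
  Add 6 4 4,
  Add 6 6 4,
  Add 6 6 4,
  Add 6 6 4,
  Add 6 6 4,
  LoadC 7 16,
  Add 6 6 7,
  LoadC 7 1,
  Add 15 6 7,
  LoadI 8 15,
  Sub 14 13 8,
  Jz 14 67,
  LoadC 7 2,
  Add 15 6 7,
  LoadI 14 15,
  Sub 11 14 0,
  Jz 11 24,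
  Jmp 26,
  Sub 11 0 14,
  Jz 11 70,
  Jz 5 51,
  Add 6 5 5,
  Add 6 6 5,
  Add 6 6 5,
  Add 6 6 5,
  Add 6 6 5,
  LoadC 7 16,
  Add 6 6 7,
  LoadC 7 5,
  Add 15 6 7,
  LoadI 14 15,
  Sub 11 8 14,
  Jz 11 40,
  Jmp 51,
  LoadC 7 4,
  Add 15 6 7,
  LoadI 14 15,
  Sub 11 14 8,
  Jz 11 46,
  Jmp 48,
  LoadC 7 0,
  Add 8 14 7,
  LoadC 7 1,
  Sub 5 5 7,
  Jmp 26,
  LoadC 7 1,
  Add 5 5 7,
  Add 6 5 5,
  Add 6 6 5,
  Add 6 6 5,
  Add 6 6 5,
  Add 6 6 5,
  LoadC 7 16,
  Add 6 6 7,
  LoadC 7 4,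
  Add 15 6 7,
  StoreI 15 8,
  LoadC 7 5,
  Add 15 6 7,
  StoreI 15 13,
  Jmp 70,
  LoadC 7 2,
  Add 15 6 7,
  StoreI 15 0,
  Add 12 0 0,
  Add 12 12 0,
  Add 12 12 0,
  Add 12 12 0,
  Add 12 12 0,
  LoadC 7 16,
  Add 12 12 7,
  LoadI 10 12,
  Jz 10 116,
  LoadC 7 3,
  Add 15 12 7,
  LoadI 11 15,
  Sub 14 11 5,
  Jz 14 85,
  Jmp 126,
  Jz 11 98,
  Add 6 11 11,
  Add 6 6 11,
  Add 6 6 11,
  Add 6 6 11,
  Add 6 6 11,
  LoadC 7 16,
  Add 6 6 7,
  LoadC 7 5,
  Add 15 6 7,
  LoadI 14 15,
  Sub 14 10 14,
  Jz 14 126,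
  LoadC 7 1,
  Add 9 11 7,
  Sub 14 9 5,
  Jz 14 103,
  Jmp 119,
  Add 6 9 9,
  Add 6 6 9,
  Add 6 6 9,
  Add 6 6 9,
  Add 6 6 9,
  LoadC 7 16,
  Add 6 6 7,
  LoadC 7 4,
  Add 15 6 7,
  LoadI 14 15,
  Sub 14 14 10,
  Jz 14 126,
  Jmp 119,
  LoadC 7 1,
  Add 15 12 7,
  StoreI 15 3,
  StoreI 12 3,
  LoadC 7 3,
  Add 15 12 7,
  StoreI 15 5,
  LoadC 7 0,
  Add 4 0 7,
  Jmp 127,
  LoadC 2 1,
  LoadC 0 0,
  LoadC 6 0,
  LoadC 7 0,
  LoadC 8 0,
  LoadC 9 0,
  LoadC 10 0,
  LoadC 11 0,
  LoadC 12 0,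
  LoadC 13 0,
  LoadC 14 0,
  LoadC 15 0
]"

lemma Pstep_len[simp]: "length Pstep = 138" by (simp add: Pstep_def)

lemma Pstep_nth[simp]:
  "Pstep ! 0 = Jz 2 2"
  "Pstep ! 1 = Jmp 127"
  "Pstep ! 2 = LoadC 7 1"
  "Pstep ! 3 = Add 3 3 7"
  "Pstep ! 4 = Sub 13 3 7"
  "Pstep ! 5 = Jz 13 70"
  "Pstep ! 6 = Add 6 4 4"
  "Pstep ! 7 = Add 6 6 4"
  "Pstep ! 8 = Add 6 6 4"
  "Pstep ! 9 = Add 6 6 4"
  "Pstep ! 10 = Add 6 6 4"
  "Pstep ! 11 = LoadC 7 16"
  "Pstep ! 12 = Add 6 6 7"
  "Pstep ! 13 = LoadC 7 1"
  "Pstep ! 14 = Add 15 6 7"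
  "Pstep ! 15 = LoadI 8 15"
  "Pstep ! 16 = Sub 14 13 8"
  "Pstep ! 17 = Jz 14 67"
  "Pstep ! 18 = LoadC 7 2"
  "Pstep ! 19 = Add 15 6 7"
  "Pstep ! 20 = LoadI 14 15"
  "Pstep ! 21 = Sub 11 14 0"
  "Pstep ! 22 = Jz 11 24"
  "Pstep ! 23 = Jmp 26"
  "Pstep ! 24 = Sub 11 0 14"
  "Pstep ! 25 = Jz 11 70"
  "Pstep ! 26 = Jz 5 51"
  "Pstep ! 27 = Add 6 5 5"
  "Pstep ! 28 = Add 6 6 5"
  "Pstep ! 29 = Add 6 6 5"
  "Pstep ! 30 = Add 6 6 5"
  "Pstep ! 31 = Add 6 6 5"
  "Pstep ! 32 = LoadC 7 16"
  "Pstep ! 33 = Add 6 6 7"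
  "Pstep ! 34 = LoadC 7 5"
  "Pstep ! 35 = Add 15 6 7"
  "Pstep ! 36 = LoadI 14 15"
  "Pstep ! 37 = Sub 11 8 14"
  "Pstep ! 38 = Jz 11 40"
  "Pstep ! 39 = Jmp 51"
  "Pstep ! 40 = LoadC 7 4"
  "Pstep ! 41 = Add 15 6 7"
  "Pstep ! 42 = LoadI 14 15"
  "Pstep ! 43 = Sub 11 14 8"
  "Pstep ! 44 = Jz 11 46"
  "Pstep ! 45 = Jmp 48"
  "Pstep ! 46 = LoadC 7 0"
  "Pstep ! 47 = Add 8 14 7"
  "Pstep ! 48 = LoadC 7 1"
  "Pstep ! 49 = Sub 5 5 7"
  "Pstep ! 50 = Jmp 26"
  "Pstep ! 51 = LoadC 7 1"
  "Pstep ! 52 = Add 5 5 7"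
  "Pstep ! 53 = Add 6 5 5"
  "Pstep ! 54 = Add 6 6 5"
  "Pstep ! 55 = Add 6 6 5"
  "Pstep ! 56 = Add 6 6 5"
  "Pstep ! 57 = Add 6 6 5"
  "Pstep ! 58 = LoadC 7 16"
  "Pstep ! 59 = Add 6 6 7"
  "Pstep ! 60 = LoadC 7 4"
  "Pstep ! 61 = Add 15 6 7"
  "Pstep ! 62 = StoreI 15 8"
  "Pstep ! 63 = LoadC 7 5"
  "Pstep ! 64 = Add 15 6 7"
  "Pstep ! 65 = StoreI 15 13"
  "Pstep ! 66 = Jmp 70"
  "Pstep ! 67 = LoadC 7 2"
  "Pstep ! 68 = Add 15 6 7"
  "Pstep ! 69 = StoreI 15 0"
  "Pstep ! 70 = Add 12 0 0"
  "Pstep ! 71 = Add 12 12 0"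
  "Pstep ! 72 = Add 12 12 0"
  "Pstep ! 73 = Add 12 12 0"
  "Pstep ! 74 = Add 12 12 0"
  "Pstep ! 75 = LoadC 7 16"
  "Pstep ! 76 = Add 12 12 7"
  "Pstep ! 77 = LoadI 10 12"
  "Pstep ! 78 = Jz 10 116"
  "Pstep ! 79 = LoadC 7 3"
  "Pstep ! 80 = Add 15 12 7"
  "Pstep ! 81 = LoadI 11 15"
  "Pstep ! 82 = Sub 14 11 5"
  "Pstep ! 83 = Jz 14 85"
  "Pstep ! 84 = Jmp 126"
  "Pstep ! 85 = Jz 11 98"
  "Pstep ! 86 = Add 6 11 11"
  "Pstep ! 87 = Add 6 6 11"
  "Pstep ! 88 = Add 6 6 11"
  "Pstep ! 89 = Add 6 6 11"
  "Pstep ! 90 = Add 6 6 11"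
  "Pstep ! 91 = LoadC 7 16"
  "Pstep ! 92 = Add 6 6 7"
  "Pstep ! 93 = LoadC 7 5"
  "Pstep ! 94 = Add 15 6 7"
  "Pstep ! 95 = LoadI 14 15"
  "Pstep ! 96 = Sub 14 10 14"
  "Pstep ! 97 = Jz 14 126"
  "Pstep ! 98 = LoadC 7 1"
  "Pstep ! 99 = Add 9 11 7"
  "Pstep ! 100 = Sub 14 9 5"
  "Pstep ! 101 = Jz 14 103"
  "Pstep ! 102 = Jmp 119"
  "Pstep ! 103 = Add 6 9 9"
  "Pstep ! 104 = Add 6 6 9"
  "Pstep ! 105 = Add 6 6 9"
  "Pstep ! 106 = Add 6 6 9"
  "Pstep ! 107 = Add 6 6 9"
  "Pstep ! 108 = LoadC 7 16"
  "Pstep ! 109 = Add 6 6 7"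
  "Pstep ! 110 = LoadC 7 4"
  "Pstep ! 111 = Add 15 6 7"
  "Pstep ! 112 = LoadI 14 15"
  "Pstep ! 113 = Sub 14 14 10"
  "Pstep ! 114 = Jz 14 126"
  "Pstep ! 115 = Jmp 119"
  "Pstep ! 116 = LoadC 7 1"
  "Pstep ! 117 = Add 15 12 7"
  "Pstep ! 118 = StoreI 15 3"
  "Pstep ! 119 = StoreI 12 3"
  "Pstep ! 120 = LoadC 7 3"
  "Pstep ! 121 = Add 15 12 7"
  "Pstep ! 122 = StoreI 15 5"
  "Pstep ! 123 = LoadC 7 0"
  "Pstep ! 124 = Add 4 0 7"
  "Pstep ! 125 = Jmp 127"
  "Pstep ! 126 = LoadC 2 1"
  "Pstep ! 127 = LoadC 0 0"
  "Pstep ! 128 = LoadC 6 0"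
  "Pstep ! 129 = LoadC 7 0"
  "Pstep ! 130 = LoadC 8 0"
  "Pstep ! 131 = LoadC 9 0"
  "Pstep ! 132 = LoadC 10 0"
  "Pstep ! 133 = LoadC 11 0"
  "Pstep ! 134 = LoadC 12 0"
  "Pstep ! 135 = LoadC 13 0"
  "Pstep ! 136 = LoadC 14 0"
  "Pstep ! 137 = LoadC 15 0"
  by (simp_all add: Pstep_def)

lemma Pstep_nth_Suc_0[simp]: "Pstep ! Suc 0 = Jmp 127" by (simp add: Pstep_def)

definition Pfin :: "instr list" where
  "Pfin = [LoadC 0 1, Jz 2 3, LoadC 0 0]"

text \<open>Memory layout: register 0 holds the input letter, 1 the alphabet size \<open>k\<close>, 2--5 the scalar
  fields of the state and 6--15 are scratch registers; field \<open>r\<close> of letter \<open>x\<close> lives at \<open>16 + 6 x + r\<close>.\<close>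

definition layout_field :: "ustate \<Rightarrow> nat \<Rightarrow> nat \<Rightarrow> nat" where
  "layout_field s r y = (if r = 0 then last_pos s y else if r = 1 then first_pos s y else if r = 2 then first_succ s y
     else if r = 3 then gap_of s y else if r = 4 then ivl_lo s y else ivl_hi s y)"

definition encode_state :: "nat \<Rightarrow> ustate \<Rightarrow> nat \<Rightarrow> nat" where
  "encode_state k s a = (if a = 1 then k else if a = 2 then amb_flag s else if a = 3 then pos s
     else if a = 4 then prev s else if a = 5 then height s
     else if 16 \<le> a \<and> a < 22 + 6 * k then layout_field s ((a - 16) mod 6) ((a - 16) div 6) else 0)"

definition mem_image :: "nat \<Rightarrow> ustate \<Rightarrow> nat \<Rightarrow> (nat \<Rightarrow> nat) \<Rightarrow> nat \<Rightarrow> nat" where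
  "mem_image k s u tv a = (if a = 0 then u else if 6 \<le> a \<and> a \<le> 15 then tv a else encode_state k s a)"

lemma diff_le_of_le[simp]: "a \<le> V \<Longrightarrow> a - b \<le> (V::nat)" by simp

lemma mem_image_field:
  assumes "x \<le> k" "r < 6"
  shows "mem_image k s u tv (6 * x + 16 + r) = layout_field s r x"
proof -
  have "(6 * x + r) mod 6 = r" "(6 * x + r) div 6 = x" using assms(2) by auto
  then show ?thesis using assms by (simp add: mem_image_def encode_state_def)
qed

lemma mem_image_field_upd:
  assumes "x \<le> k" "r < 6"
    and "\<And>r' y. r' < 6 \<Longrightarrow> layout_field s' r' y = (if r' = r \<and> y = x then v else layout_field s r' y)"
    and "amb_flag s' = amb_flag s" "pos s' = pos s" "prev s' = prev s" "height s' = height s"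
  shows "(mem_image k s u tv)(6 * x + 16 + r := v) = mem_image k s' u tv"
proof
  fix a
  show "((mem_image k s u tv)(6 * x + 16 + r := v)) a = mem_image k s' u tv a"
  proof (cases "16 \<le> a \<and> a < 22 + 6 * k")
    case True
    have "a = 6 * x + 16 + r \<longleftrightarrow> (a - 16) mod 6 = r \<and> (a - 16) div 6 = x"
      using True assms(2) by auto
    then show ?thesis using True assms by (auto simp: mem_image_def encode_state_def)
  next
    case False then show ?thesis using assms by (auto simp: mem_image_def encode_state_def)
  qed
qed

context
  fixes k :: nat
begin

lemma mem_image_scalar[simp]:
  "mem_image k s u tv 0 = u" "mem_image k s u tv (Suc 0) = k" "mem_image k s u tv 2 = amb_flag s"
  "mem_image k s u tv 3 = pos s" "mem_image k s u tv 4 = prev s" "mem_image k s u tv 5 = height s"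
  "6 \<le> a \<Longrightarrow> a \<le> 15 \<Longrightarrow> mem_image k s u tv a = tv a"
  by (simp_all add: mem_image_def encode_state_def)

lemma mem_image_scalar_upd[simp]:
  "(mem_image k s u tv)(0 := v) = mem_image k s v tv"
  "(mem_image k s u tv)(2 := v) = mem_image k (s\<lparr>amb_flag := v\<rparr>) u tv"
  "(mem_image k s u tv)(3 := v) = mem_image k (s\<lparr>pos := v\<rparr>) u tv"
  "(mem_image k s u tv)(4 := v) = mem_image k (s\<lparr>prev := v\<rparr>) u tv"
  "(mem_image k s u tv)(5 := v) = mem_image k (s\<lparr>height := v\<rparr>) u tv"
  "6 \<le> a \<Longrightarrow> a \<le> 15 \<Longrightarrow> (mem_image k s u tv)(a := v) = mem_image k s u (tv(a := v))"
  by (auto intro!: ext simp: mem_image_def encode_state_def layout_field_def)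

lemma mem_image_last_pos[simp]:
  "x \<le> k \<Longrightarrow> mem_image k s u tv (6 * x + 16) = last_pos s x"
  "x \<le> k \<Longrightarrow> mem_image k s u tv (16 + 6 * x) = last_pos s x"
  "Suc x \<le> k \<Longrightarrow> mem_image k s u tv (6 * x + 22) = last_pos s (Suc x)"
  "Suc x \<le> k \<Longrightarrow> mem_image k s u tv (22 + 6 * x) = last_pos s (Suc x)"
  "mem_image k s u tv 16 = last_pos s 0"
  "Suc 0 \<le> k \<Longrightarrow> mem_image k s u tv 22 = last_pos s (Suc 0)"
  "x \<le> k \<Longrightarrow> (mem_image k s u tv)(6 * x + 16 := v) = mem_image k (s\<lparr>last_pos := (last_pos s)(x := v)\<rparr>) u tv"
  "x \<le> k \<Longrightarrow> (mem_image k s u tv)(16 + 6 * x := v) = mem_image k (s\<lparr>last_pos := (last_pos s)(x := v)\<rparr>) u tv"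
  "Suc x \<le> k \<Longrightarrow> (mem_image k s u tv)(6 * x + 22 := v) = mem_image k (s\<lparr>last_pos := (last_pos s)(Suc x := v)\<rparr>) u tv"
  "Suc x \<le> k \<Longrightarrow> (mem_image k s u tv)(22 + 6 * x := v) = mem_image k (s\<lparr>last_pos := (last_pos s)(Suc x := v)\<rparr>) u tv"
  "(mem_image k s u tv)(16 := v) = mem_image k (s\<lparr>last_pos := (last_pos s)(0 := v)\<rparr>) u tv"
  "Suc 0 \<le> k \<Longrightarrow> (mem_image k s u tv)(22 := v) = mem_image k (s\<lparr>last_pos := (last_pos s)(Suc 0 := v)\<rparr>) u tv"
  using mem_image_field[of x k 0] mem_image_field[of "Suc x" k 0] mem_image_field[of 0 k 0] mem_image_field[of "Suc 0" k 0]
    mem_image_field_upd[of x k 0 "s\<lparr>last_pos := (last_pos s)(x := v)\<rparr>" v s]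
    mem_image_field_upd[of "Suc x" k 0 "s\<lparr>last_pos := (last_pos s)(Suc x := v)\<rparr>" v s]
    mem_image_field_upd[of 0 k 0 "s\<lparr>last_pos := (last_pos s)(0 := v)\<rparr>" v s]
    mem_image_field_upd[of "Suc 0" k 0 "s\<lparr>last_pos := (last_pos s)(Suc 0 := v)\<rparr>" v s]
  by (simp_all add: layout_field_def algebra_simps)

lemma mem_image_first_pos[simp]:
  "x \<le> k \<Longrightarrow> mem_image k s u tv (6 * x + 17) = first_pos s x"
  "x \<le> k \<Longrightarrow> mem_image k s u tv (17 + 6 * x) = first_pos s x"
  "Suc x \<le> k \<Longrightarrow> mem_image k s u tv (6 * x + 23) = first_pos s (Suc x)"
  "Suc x \<le> k \<Longrightarrow> mem_image k s u tv (23 + 6 * x) = first_pos s (Suc x)"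
  "mem_image k s u tv 17 = first_pos s 0"
  "Suc 0 \<le> k \<Longrightarrow> mem_image k s u tv 23 = first_pos s (Suc 0)"
  "x \<le> k \<Longrightarrow> (mem_image k s u tv)(6 * x + 17 := v) = mem_image k (s\<lparr>first_pos := (first_pos s)(x := v)\<rparr>) u tv"
  "x \<le> k \<Longrightarrow> (mem_image k s u tv)(17 + 6 * x := v) = mem_image k (s\<lparr>first_pos := (first_pos s)(x := v)\<rparr>) u tv"
  "Suc x \<le> k \<Longrightarrow> (mem_image k s u tv)(6 * x + 23 := v) = mem_image k (s\<lparr>first_pos := (first_pos s)(Suc x := v)\<rparr>) u tv"
  "Suc x \<le> k \<Longrightarrow> (mem_image k s u tv)(23 + 6 * x := v) = mem_image k (s\<lparr>first_pos := (first_pos s)(Suc x := v)\<rparr>) u tv"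
  "(mem_image k s u tv)(17 := v) = mem_image k (s\<lparr>first_pos := (first_pos s)(0 := v)\<rparr>) u tv"
  "Suc 0 \<le> k \<Longrightarrow> (mem_image k s u tv)(23 := v) = mem_image k (s\<lparr>first_pos := (first_pos s)(Suc 0 := v)\<rparr>) u tv"
  using mem_image_field[of x k 1] mem_image_field[of "Suc x" k 1] mem_image_field[of 0 k 1] mem_image_field[of "Suc 0" k 1]
    mem_image_field_upd[of x k 1 "s\<lparr>first_pos := (first_pos s)(x := v)\<rparr>" v s]
    mem_image_field_upd[of "Suc x" k 1 "s\<lparr>first_pos := (first_pos s)(Suc x := v)\<rparr>" v s]
    mem_image_field_upd[of 0 k 1 "s\<lparr>first_pos := (first_pos s)(0 := v)\<rparr>" v s]
    mem_image_field_upd[of "Suc 0" k 1 "s\<lparr>first_pos := (first_pos s)(Suc 0 := v)\<rparr>" v s]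
  by (simp_all add: layout_field_def algebra_simps)

lemma mem_image_first_succ[simp]:
  "x \<le> k \<Longrightarrow> mem_image k s u tv (6 * x + 18) = first_succ s x"
  "x \<le> k \<Longrightarrow> mem_image k s u tv (18 + 6 * x) = first_succ s x"
  "Suc x \<le> k \<Longrightarrow> mem_image k s u tv (6 * x + 24) = first_succ s (Suc x)"
  "Suc x \<le> k \<Longrightarrow> mem_image k s u tv (24 + 6 * x) = first_succ s (Suc x)"
  "mem_image k s u tv 18 = first_succ s 0"
  "Suc 0 \<le> k \<Longrightarrow> mem_image k s u tv 24 = first_succ s (Suc 0)"
  "x \<le> k \<Longrightarrow> (mem_image k s u tv)(6 * x + 18 := v) = mem_image k (s\<lparr>first_succ := (first_succ s)(x := v)\<rparr>) u tv"
  "x \<le> k \<Longrightarrow> (mem_image k s u tv)(18 + 6 * x := v) = mem_image k (s\<lparr>first_succ := (first_succ s)(x := v)\<rparr>) u tv"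
  "Suc x \<le> k \<Longrightarrow> (mem_image k s u tv)(6 * x + 24 := v) = mem_image k (s\<lparr>first_succ := (first_succ s)(Suc x := v)\<rparr>) u tv"
  "Suc x \<le> k \<Longrightarrow> (mem_image k s u tv)(24 + 6 * x := v) = mem_image k (s\<lparr>first_succ := (first_succ s)(Suc x := v)\<rparr>) u tv"
  "(mem_image k s u tv)(18 := v) = mem_image k (s\<lparr>first_succ := (first_succ s)(0 := v)\<rparr>) u tv"
  "Suc 0 \<le> k \<Longrightarrow> (mem_image k s u tv)(24 := v) = mem_image k (s\<lparr>first_succ := (first_succ s)(Suc 0 := v)\<rparr>) u tv"
  using mem_image_field[of x k 2] mem_image_field[of "Suc x" k 2] mem_image_field[of 0 k 2] mem_image_field[of "Suc 0" k 2]
    mem_image_field_upd[of x k 2 "s\<lparr>first_succ := (first_succ s)(x := v)\<rparr>" v s]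
    mem_image_field_upd[of "Suc x" k 2 "s\<lparr>first_succ := (first_succ s)(Suc x := v)\<rparr>" v s]
    mem_image_field_upd[of 0 k 2 "s\<lparr>first_succ := (first_succ s)(0 := v)\<rparr>" v s]
    mem_image_field_upd[of "Suc 0" k 2 "s\<lparr>first_succ := (first_succ s)(Suc 0 := v)\<rparr>" v s]
  by (simp_all add: layout_field_def algebra_simps)

lemma mem_image_gap_of[simp]:
  "x \<le> k \<Longrightarrow> mem_image k s u tv (6 * x + 19) = gap_of s x"
  "x \<le> k \<Longrightarrow> mem_image k s u tv (19 + 6 * x) = gap_of s x"
  "Suc x \<le> k \<Longrightarrow> mem_image k s u tv (6 * x + 25) = gap_of s (Suc x)"
  "Suc x \<le> k \<Longrightarrow> mem_image k s u tv (25 + 6 * x) = gap_of s (Suc x)"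
  "mem_image k s u tv 19 = gap_of s 0"
  "Suc 0 \<le> k \<Longrightarrow> mem_image k s u tv 25 = gap_of s (Suc 0)"
  "x \<le> k \<Longrightarrow> (mem_image k s u tv)(6 * x + 19 := v) = mem_image k (s\<lparr>gap_of := (gap_of s)(x := v)\<rparr>) u tv"
  "x \<le> k \<Longrightarrow> (mem_image k s u tv)(19 + 6 * x := v) = mem_image k (s\<lparr>gap_of := (gap_of s)(x := v)\<rparr>) u tv"
  "Suc x \<le> k \<Longrightarrow> (mem_image k s u tv)(6 * x + 25 := v) = mem_image k (s\<lparr>gap_of := (gap_of s)(Suc x := v)\<rparr>) u tv"
  "Suc x \<le> k \<Longrightarrow> (mem_image k s u tv)(25 + 6 * x := v) = mem_image k (s\<lparr>gap_of := (gap_of s)(Suc x := v)\<rparr>) u tv"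
  "(mem_image k s u tv)(19 := v) = mem_image k (s\<lparr>gap_of := (gap_of s)(0 := v)\<rparr>) u tv"
  "Suc 0 \<le> k \<Longrightarrow> (mem_image k s u tv)(25 := v) = mem_image k (s\<lparr>gap_of := (gap_of s)(Suc 0 := v)\<rparr>) u tv"
  using mem_image_field[of x k 3] mem_image_field[of "Suc x" k 3] mem_image_field[of 0 k 3] mem_image_field[of "Suc 0" k 3]
    mem_image_field_upd[of x k 3 "s\<lparr>gap_of := (gap_of s)(x := v)\<rparr>" v s]
    mem_image_field_upd[of "Suc x" k 3 "s\<lparr>gap_of := (gap_of s)(Suc x := v)\<rparr>" v s]
    mem_image_field_upd[of 0 k 3 "s\<lparr>gap_of := (gap_of s)(0 := v)\<rparr>" v s]
    mem_image_field_upd[of "Suc 0" k 3 "s\<lparr>gap_of := (gap_of s)(Suc 0 := v)\<rparr>" v s]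
  by (simp_all add: layout_field_def algebra_simps)

lemma mem_image_ivl_lo[simp]:
  "x \<le> k \<Longrightarrow> mem_image k s u tv (6 * x + 20) = ivl_lo s x"
  "x \<le> k \<Longrightarrow> mem_image k s u tv (20 + 6 * x) = ivl_lo s x"
  "Suc x \<le> k \<Longrightarrow> mem_image k s u tv (6 * x + 26) = ivl_lo s (Suc x)"
  "Suc x \<le> k \<Longrightarrow> mem_image k s u tv (26 + 6 * x) = ivl_lo s (Suc x)"
  "mem_image k s u tv 20 = ivl_lo s 0"
  "Suc 0 \<le> k \<Longrightarrow> mem_image k s u tv 26 = ivl_lo s (Suc 0)"
  "x \<le> k \<Longrightarrow> (mem_image k s u tv)(6 * x + 20 := v) = mem_image k (s\<lparr>ivl_lo := (ivl_lo s)(x := v)\<rparr>) u tv"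
  "x \<le> k \<Longrightarrow> (mem_image k s u tv)(20 + 6 * x := v) = mem_image k (s\<lparr>ivl_lo := (ivl_lo s)(x := v)\<rparr>) u tv"
  "Suc x \<le> k \<Longrightarrow> (mem_image k s u tv)(6 * x + 26 := v) = mem_image k (s\<lparr>ivl_lo := (ivl_lo s)(Suc x := v)\<rparr>) u tv"
  "Suc x \<le> k \<Longrightarrow> (mem_image k s u tv)(26 + 6 * x := v) = mem_image k (s\<lparr>ivl_lo := (ivl_lo s)(Suc x := v)\<rparr>) u tv"
  "(mem_image k s u tv)(20 := v) = mem_image k (s\<lparr>ivl_lo := (ivl_lo s)(0 := v)\<rparr>) u tv"
  "Suc 0 \<le> k \<Longrightarrow> (mem_image k s u tv)(26 := v) = mem_image k (s\<lparr>ivl_lo := (ivl_lo s)(Suc 0 := v)\<rparr>) u tv"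
  using mem_image_field[of x k 4] mem_image_field[of "Suc x" k 4] mem_image_field[of 0 k 4] mem_image_field[of "Suc 0" k 4]
    mem_image_field_upd[of x k 4 "s\<lparr>ivl_lo := (ivl_lo s)(x := v)\<rparr>" v s]
    mem_image_field_upd[of "Suc x" k 4 "s\<lparr>ivl_lo := (ivl_lo s)(Suc x := v)\<rparr>" v s]
    mem_image_field_upd[of 0 k 4 "s\<lparr>ivl_lo := (ivl_lo s)(0 := v)\<rparr>" v s]
    mem_image_field_upd[of "Suc 0" k 4 "s\<lparr>ivl_lo := (ivl_lo s)(Suc 0 := v)\<rparr>" v s]
  by (simp_all add: layout_field_def algebra_simps)

lemma mem_image_ivl_hi[simp]:
  "x \<le> k \<Longrightarrow> mem_image k s u tv (6 * x + 21) = ivl_hi s x"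
  "x \<le> k \<Longrightarrow> mem_image k s u tv (21 + 6 * x) = ivl_hi s x"
  "Suc x \<le> k \<Longrightarrow> mem_image k s u tv (6 * x + 27) = ivl_hi s (Suc x)"
  "Suc x \<le> k \<Longrightarrow> mem_image k s u tv (27 + 6 * x) = ivl_hi s (Suc x)"
  "mem_image k s u tv 21 = ivl_hi s 0"
  "Suc 0 \<le> k \<Longrightarrow> mem_image k s u tv 27 = ivl_hi s (Suc 0)"
  "x \<le> k \<Longrightarrow> (mem_image k s u tv)(6 * x + 21 := v) = mem_image k (s\<lparr>ivl_hi := (ivl_hi s)(x := v)\<rparr>) u tv"
  "x \<le> k \<Longrightarrow> (mem_image k s u tv)(21 + 6 * x := v) = mem_image k (s\<lparr>ivl_hi := (ivl_hi s)(x := v)\<rparr>) u tv"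
  "Suc x \<le> k \<Longrightarrow> (mem_image k s u tv)(6 * x + 27 := v) = mem_image k (s\<lparr>ivl_hi := (ivl_hi s)(Suc x := v)\<rparr>) u tv"
  "Suc x \<le> k \<Longrightarrow> (mem_image k s u tv)(27 + 6 * x := v) = mem_image k (s\<lparr>ivl_hi := (ivl_hi s)(Suc x := v)\<rparr>) u tv"
  "(mem_image k s u tv)(21 := v) = mem_image k (s\<lparr>ivl_hi := (ivl_hi s)(0 := v)\<rparr>) u tv"
  "Suc 0 \<le> k \<Longrightarrow> (mem_image k s u tv)(27 := v) = mem_image k (s\<lparr>ivl_hi := (ivl_hi s)(Suc 0 := v)\<rparr>) u tv"
  using mem_image_field[of x k 5] mem_image_field[of "Suc x" k 5] mem_image_field[of 0 k 5] mem_image_field[of "Suc 0" k 5]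
    mem_image_field_upd[of x k 5 "s\<lparr>ivl_hi := (ivl_hi s)(x := v)\<rparr>" v s]
    mem_image_field_upd[of "Suc x" k 5 "s\<lparr>ivl_hi := (ivl_hi s)(Suc x := v)\<rparr>" v s]
    mem_image_field_upd[of 0 k 5 "s\<lparr>ivl_hi := (ivl_hi s)(0 := v)\<rparr>" v s]
    mem_image_field_upd[of "Suc 0" k 5 "s\<lparr>ivl_hi := (ivl_hi s)(Suc 0 := v)\<rparr>" v s]
  by (simp_all add: layout_field_def algebra_simps)

definition state_bounded :: "nat \<Rightarrow> ustate \<Rightarrow> bool" where
  "state_bounded V s \<longleftrightarrow> k \<le> V \<and> amb_flag s \<le> V \<and> pos s \<le> V \<and> prev s \<le> V \<and> height s \<le> V \<and>
    (\<forall>y\<le>k. last_pos s y \<le> V \<and> first_pos s y \<le> V \<and> first_succ s y \<le> V \<and> gap_of s y \<le> V \<and> ivl_lo s y \<le> V \<and> ivl_hi s y \<le> V)"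

lemma bounded_by_encode_state[simp]: "state_bounded V s \<Longrightarrow> bounded_by V (encode_state k s)"
  unfolding bounded_by_def
proof
  fix a assume e: "state_bounded V s"
  show "encode_state k s a \<le> V"
  proof (cases "16 \<le> a \<and> a < 22 + 6 * k")
    case True
    then have "(a - 16) div 6 \<le> k" by auto
    then show ?thesis using e unfolding encode_state_def state_bounded_def layout_field_def by auto
  next
    case False then show ?thesis using e unfolding encode_state_def state_bounded_def by auto
  qed
qed

lemma bounded_by_mem_image[simp]: "state_bounded V s \<Longrightarrow> u \<le> V \<Longrightarrow> bounded_by V tv \<Longrightarrow> bounded_by V (mem_image k s u tv)"
  using bounded_by_encode_state unfolding bounded_by_def mem_image_def by auto

lemma state_bounded_upd[simp]:
  "state_bounded V s \<Longrightarrow> v \<le> V \<Longrightarrow> state_bounded V (s\<lparr>amb_flag := v\<rparr>)"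
  "state_bounded V s \<Longrightarrow> v \<le> V \<Longrightarrow> state_bounded V (s\<lparr>pos := v\<rparr>)"
  "state_bounded V s \<Longrightarrow> v \<le> V \<Longrightarrow> state_bounded V (s\<lparr>prev := v\<rparr>)"
  "state_bounded V s \<Longrightarrow> v \<le> V \<Longrightarrow> state_bounded V (s\<lparr>height := v\<rparr>)"
  "state_bounded V s \<Longrightarrow> \<forall>y\<le>k. f y \<le> V \<Longrightarrow> state_bounded V (s\<lparr>last_pos := f\<rparr>)"
  "state_bounded V s \<Longrightarrow> \<forall>y\<le>k. f y \<le> V \<Longrightarrow> state_bounded V (s\<lparr>first_pos := f\<rparr>)"
  "state_bounded V s \<Longrightarrow> \<forall>y\<le>k. f y \<le> V \<Longrightarrow> state_bounded V (s\<lparr>first_succ := f\<rparr>)"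
  "state_bounded V s \<Longrightarrow> \<forall>y\<le>k. f y \<le> V \<Longrightarrow> state_bounded V (s\<lparr>gap_of := f\<rparr>)"
  "state_bounded V s \<Longrightarrow> \<forall>y\<le>k. f y \<le> V \<Longrightarrow> state_bounded V (s\<lparr>ivl_lo := f\<rparr>)"
  "state_bounded V s \<Longrightarrow> \<forall>y\<le>k. f y \<le> V \<Longrightarrow> state_bounded V (s\<lparr>ivl_hi := f\<rparr>)"
  unfolding state_bounded_def by auto

lemma state_boundedD[simp]:
  "state_bounded V s \<Longrightarrow> k \<le> V" "state_bounded V s \<Longrightarrow> amb_flag s \<le> V" "state_bounded V s \<Longrightarrow> pos s \<le> V"
  "state_bounded V s \<Longrightarrow> prev s \<le> V" "state_bounded V s \<Longrightarrow> height s \<le> V"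
  "state_bounded V s \<Longrightarrow> x \<le> k \<Longrightarrow> last_pos s x \<le> V"
  "state_bounded V s \<Longrightarrow> x \<le> k \<Longrightarrow> first_pos s x \<le> V"
  "state_bounded V s \<Longrightarrow> x \<le> k \<Longrightarrow> first_succ s x \<le> V"
  "state_bounded V s \<Longrightarrow> x \<le> k \<Longrightarrow> gap_of s x \<le> V"
  "state_bounded V s \<Longrightarrow> x \<le> k \<Longrightarrow> ivl_lo s x \<le> V"
  "state_bounded V s \<Longrightarrow> x \<le> k \<Longrightarrow> ivl_hi s x \<le> V"
  unfolding state_bounded_def by auto

lemma mem_image_clear[simp]: "tv 6 = 0 \<Longrightarrow> tv 7 = 0 \<Longrightarrow> tv 8 = 0 \<Longrightarrow> tv 9 = 0 \<Longrightarrow> tv 10 = 0 \<Longrightarrow>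
  tv 11 = 0 \<Longrightarrow> tv 12 = 0 \<Longrightarrow> tv 13 = 0 \<Longrightarrow> tv 14 = 0 \<Longrightarrow> tv 15 = 0 \<Longrightarrow> mem_image k s 0 tv = encode_state k s"
proof (rule ext)
  fix a assume "tv 6 = 0" "tv 7 = 0" "tv 8 = 0" "tv 9 = 0" "tv 10 = 0" "tv 11 = 0" "tv 12 = 0" "tv 13 = 0" "tv 14 = 0" "tv 15 = 0"
  moreover have "6 \<le> (a::nat) \<Longrightarrow> a \<le> 15 \<Longrightarrow> a = 6 \<or> a = 7 \<or> a = 8 \<or> a = 9 \<or> a = 10 \<or> a = 11 \<or> a = 12 \<or> a = 13 \<or> a = 14 \<or> a = 15" by presburger
  ultimately show "mem_image k s 0 tv a = encode_state k s a" unfolding mem_image_def encode_state_def by auto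
qed

end

context
  fixes k :: nat
begin

lemma check_char_block:
  assumes "u < k" "height s \<le> k" "state_bounded k V s" "bounded_by V tv" "22 + 6*k \<le> S" "22 + 6*k \<le> V"
  shows "wp Pstep S V 70 (mem_image k s u tv) (\<lambda>t m. m = encode_state k (check_char s u) \<and> t \<le> 70)"
  using assms
  apply -
  apply ((((rule conjI impI)+)?, rule wp_unfold, simp) | (auto simp: check_char_def record_char_def last_pos_covered_def Let_def; fail))+
  done

end

context
  fixes k :: nat
begin

definition loop_mem :: "nat \<Rightarrow> ustate \<Rightarrow> nat \<Rightarrow> nat \<Rightarrow> nat \<Rightarrow> (nat \<Rightarrow> nat) \<Rightarrow> bool" where
  "loop_mem V s u f c m \<longleftrightarrow> m = mem_image k s u m \<and> bounded_by V m \<and> m 8 = f \<and> m 13 = c"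

lemma mem_image_idem[simp]: "mem_image k s u (mem_image k s u tv) = mem_image k s u tv"
  by (rule ext) (simp add: mem_image_def)

lemma loop_mem_intro: "s1 = s2 \<Longrightarrow> state_bounded k V s1 \<Longrightarrow> u \<le> V \<Longrightarrow> bounded_by V tv \<Longrightarrow> tv 8 = f \<Longrightarrow> tv 13 = c \<Longrightarrow>
   loop_mem V s2 u f c (mem_image k s1 u tv)"
  unfolding loop_mem_def by simp

lemma loop_mem_elim: "loop_mem V s u f c m \<Longrightarrow> m = mem_image k s u m \<and> bounded_by V m \<and> m 8 = f \<and> m 13 = c"
  unfolding loop_mem_def by auto

lemma pop_merge_loop:
  assumes "height s \<le> k" "state_bounded k V s" "loop_mem V s u f c m" "u < k" "22 + 6*k \<le> S" "22 + 6*k \<le> V"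
   and cont: "\<And>m'. loop_mem V (s\<lparr>height := fst (pop_merge (ivl_lo s) (ivl_hi s) (height s) f)\<rparr>) u (snd (pop_merge (ivl_lo s) (ivl_hi s) (height s) f)) c m' \<Longrightarrow>
      wp Pstep S V 51 m' (\<lambda>t m. m = M \<and> t + 23 * (height s - fst (pop_merge (ivl_lo s) (ivl_hi s) (height s) f)) + 14 + D \<le> B)"
  shows "wp Pstep S V 26 m (\<lambda>t m. m = M \<and> t + D \<le> B)"
  using assms
proof (induction "height s" arbitrary: s f m D)
  case 0
  obtain tv where m: "m = mem_image k s u tv" "bounded_by V tv" "tv 8 = f" "tv 13 = c" using loop_mem_elim[OF 0(4)] by blast
  have ss: "s\<lparr>height := 0\<rparr> = s" using 0(1) by simp
  have c: "wp Pstep S V 51 (mem_image k s u tv) (\<lambda>t m. m = M \<and> t + 14 + D \<le> B)"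
    using 0(8)[of "mem_image k s u tv"] 0(1)[symmetric] 0(4) m by (simp add: ss)
  show ?case unfolding m(1)
    apply (rule wp_unfold)
    using 0(1)[symmetric] 0(3) 0(5) 0(6) 0(7) m
    apply simp
    apply (rule wp_mono[OF c])
    by simp
next
  case (Suc n)
  obtain tv where m: "m = mem_image k s u tv" "bounded_by V tv" "tv 8 = f" "tv 13 = c" using loop_mem_elim[OF Suc(5)] by blast
  define f' where "f' = (if ivl_lo s (Suc n) \<le> f then ivl_lo s (Suc n) else f)"
  have hS: "height s = Suc n" using Suc(2) by simp
  have fV: "f \<le> V" using m(2,3) unfolding bounded_by_def by auto
  show ?case
  proof (rule wp_to_wp[where stops="{26,51}" and R="\<lambda>t pc m'. (pc = 26 \<longrightarrow> t \<le> 23 \<and> f \<le> ivl_hi s (Suc n) \<and> loop_mem V (s\<lparr>height := n\<rparr>) u f' c m') \<and>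
         (pc = 51 \<longrightarrow> t \<le> 14 \<and> \<not> f \<le> ivl_hi s (Suc n) \<and> loop_mem V s u f c m')"])
    show "wp_to Pstep S V {26, 51} 26 m (\<lambda>t pc m'. (pc = 26 \<longrightarrow> t \<le> 23 \<and> f \<le> ivl_hi s (Suc n) \<and> loop_mem V (s\<lparr>height := n\<rparr>) u f' c m') \<and>
         (pc = 51 \<longrightarrow> t \<le> 14 \<and> \<not> f \<le> ivl_hi s (Suc n) \<and> loop_mem V s u f c m'))"
      unfolding m(1) f'_def
      using hS Suc(3) Suc(4) Suc(6) Suc(7) Suc(8) m(2,3,4) fV
      apply -
      apply (rule wp_to_first, simp)
      apply ((((rule conjI impI)+)?, rule wp_to_unfold, simp) | (auto intro!: loop_mem_intro; fail))+
      done
  next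
    fix t pc' :: nat and m' :: "nat \<Rightarrow> nat"
    assume pc': "pc' \<in> {26, 51}" and R: "(pc' = 26 \<longrightarrow> t \<le> 23 \<and> f \<le> ivl_hi s (Suc n) \<and> loop_mem V (s\<lparr>height := n\<rparr>) u f' c m') \<and>
         (pc' = 51 \<longrightarrow> t \<le> 14 \<and> \<not> f \<le> ivl_hi s (Suc n) \<and> loop_mem V s u f c m')"
    show "wp Pstep S V pc' m' (\<lambda>t' m. m = M \<and> t + t' + D \<le> B)"
    proof (cases "pc' = 26")
      case True
      then have R1: "t \<le> 23" "f \<le> ivl_hi s (Suc n)" "loop_mem V (s\<lparr>height := n\<rparr>) u f' c m'" using R by auto
      have ml: "pop_merge (ivl_lo s) (ivl_hi s) (Suc n) f = pop_merge (ivl_lo s) (ivl_hi s) n f'"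
        using pop_merge_pop[of "Suc n" f "ivl_hi s" "ivl_lo s"] R1(2) unfolding f'_def by simp
      have le: "fst (pop_merge (ivl_lo s) (ivl_hi s) n f') \<le> n" by (rule pop_merge_fst_le)
      have IH: "wp Pstep S V 26 m' (\<lambda>t' m. m = M \<and> t' + (t + D) \<le> B)"
      proof (rule Suc(1)[of "s\<lparr>height := n\<rparr>"])
        show "n = height (s\<lparr>height := n\<rparr>)" by simp
        show "height (s\<lparr>height := n\<rparr>) \<le> k" using Suc(3) hS by simp
        have "height s \<le> V" using Suc(4) by simp
        then show "state_bounded k V (s\<lparr>height := n\<rparr>)" using Suc(4) hS by simp
        show "loop_mem V (s\<lparr>height := n\<rparr>) u f' c m'" by (rule R1(3))
        show "u < k" "22 + 6 * k \<le> S" "22 + 6 * k \<le> V" by fact+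
        fix m'' assume L: "loop_mem V (s\<lparr>height := n, height := fst (pop_merge (ivl_lo (s\<lparr>height := n\<rparr>)) (ivl_hi (s\<lparr>height := n\<rparr>)) (height (s\<lparr>height := n\<rparr>)) f')\<rparr>) u
               (snd (pop_merge (ivl_lo (s\<lparr>height := n\<rparr>)) (ivl_hi (s\<lparr>height := n\<rparr>)) (height (s\<lparr>height := n\<rparr>)) f')) c m''"
        have "wp Pstep S V 51 m'' (\<lambda>t m. m = M \<and> t + 23 * (height s - fst (pop_merge (ivl_lo s) (ivl_hi s) (height s) f)) + 14 + D \<le> B)"
          using Suc(9)[of m''] L ml hS by simp
        then show "wp Pstep S V 51 m'' (\<lambda>ta m. m = M \<and> ta + 23 * (height (s\<lparr>height := n\<rparr>) - fst (pop_merge (ivl_lo (s\<lparr>height := n\<rparr>)) (ivl_hi (s\<lparr>height := n\<rparr>)) (height (s\<lparr>height := n\<rparr>)) f')) + 14 + (t + D) \<le> B)"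
          by (rule wp_mono) (use ml hS le R1(1) in auto)
      qed
      show ?thesis using True by (rule ssubst) (rule wp_mono[OF IH], simp)
    next
      case False
      then have p51: "pc' = 51" using pc' by auto
      then have R1: "t \<le> 14" "\<not> f \<le> ivl_hi s (Suc n)" "loop_mem V s u f c m'" using R by auto
      have ml: "pop_merge (ivl_lo s) (ivl_hi s) (Suc n) f = (Suc n, f)"
        using pop_merge_stop[of "Suc n" f "ivl_hi s" "ivl_lo s"] R1(2) by simp
      have ss: "s\<lparr>height := Suc n\<rparr> = s" using hS by simp
      have "wp Pstep S V 51 m' (\<lambda>t m. m = M \<and> t + 23 * (height s - fst (pop_merge (ivl_lo s) (ivl_hi s) (height s) f)) + 14 + D \<le> B)"
        using Suc(9)[of m'] R1(3) ml hS ss by simp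
      then show ?thesis unfolding p51 by (rule wp_mono) (use ml hS R1(1) in auto)
    qed
  qed
qed

end

context
  fixes k :: nat
begin

definition check_char_mem :: "nat \<Rightarrow> ustate \<Rightarrow> nat \<Rightarrow> (nat \<Rightarrow> nat) \<Rightarrow> bool" where
  "check_char_mem V s u m \<longleftrightarrow> m = mem_image k s u m \<and> bounded_by V m"

lemma check_char_mem_intro: "s1 = s2 \<Longrightarrow> state_bounded k V s1 \<Longrightarrow> u \<le> V \<Longrightarrow> bounded_by V tv \<Longrightarrow> check_char_mem V s2 u (mem_image k s1 u tv)"
  unfolding check_char_mem_def by simp

lemma check_char_mem_elim: "check_char_mem V s u m \<Longrightarrow> m = mem_image k s u m \<and> bounded_by V m"
  unfolding check_char_mem_def by auto

lemma check_char_block_mem: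
  assumes "u < k" "height s \<le> k" "state_bounded k V s" "check_char_mem V s u m" "22 + 6*k \<le> S" "22 + 6*k \<le> V" "70 + D \<le> B"
  shows "wp Pstep S V 70 m (\<lambda>t m. m = encode_state k (check_char s u) \<and> t + D \<le> B)"
proof -
  have m: "m = mem_image k s u m" "bounded_by V m" using check_char_mem_elim[OF assms(4)] by auto
  show ?thesis
    apply (subst m(1))
    apply (rule wp_mono[OF check_char_block[OF assms(1,2,3) m(2) assms(5,6)]])
    using assms(7) by auto
qed

lemma push_block:
  assumes "u < k" "Suc h \<le> k" "state_bounded k V s" "loop_mem k V (s\<lparr>height := h\<rparr>) u f c m" "f \<le> V" "c \<le> V"
    "22 + 6*k \<le> S" "22 + 6*k \<le> V" "88 + D \<le> B"
    "s' = s\<lparr>height := Suc h, ivl_lo := (ivl_lo s)(Suc h := f), ivl_hi := (ivl_hi s)(Suc h := c)\<rparr>"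
  shows "wp Pstep S V 51 m (\<lambda>t m. m = encode_state k (check_char s' u) \<and> t + D \<le> B)"
proof -
  obtain tv where m: "m = mem_image k (s\<lparr>height := h\<rparr>) u tv" "bounded_by V tv" "tv 8 = f" "tv 13 = c" using loop_mem_elim[OF assms(4)] by blast
  have hV: "Suc h \<le> V" using assms(2,8) by simp
  show ?thesis
  proof (rule wp_to_wp[where stops="{70}" and R="\<lambda>t pc m'. t \<le> 18 \<and> check_char_mem V s' u m'"])
    show "wp_to Pstep S V {70} 51 m (\<lambda>t pc m'. t \<le> 18 \<and> check_char_mem V s' u m')"
      unfolding m(1) using assms(1,2,3,5,6,7,8,10) m(2,3,4) hV
      apply -
      apply ((((rule conjI impI)+)?, rule wp_to_unfold, simp) | (auto intro!: check_char_mem_intro; fail))+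
      done
  next
    fix t pc' :: nat and m' :: "nat \<Rightarrow> nat" assume "pc' \<in> {70::nat}" "t \<le> 18 \<and> check_char_mem V s' u m'"
    then have "wp Pstep S V pc' m' (\<lambda>t' m. m = encode_state k (check_char s' u) \<and> t' + (t + D) \<le> B)"
      using check_char_block_mem[of u s' V m' S "t + D" B] assms by simp
    then show "wp Pstep S V pc' m' (\<lambda>t' m. m = encode_state k (check_char s' u) \<and> t + t' + D \<le> B)"
      by (rule wp_mono) auto
  qed
qed

end

context
  fixes k :: nat
begin

lemma state_bounded_push_cover:
  assumes "state_bounded k V s" "u \<le> V" "height (push_cover s u) \<le> k" "height s \<le> k" "prev s \<le> k"
  shows "state_bounded k V (push_cover s u)"
proof -
  have kV: "k \<le> V" using assms(1) by simp
  have fV: "first_pos s (prev s) \<le> V" using assms(1,5) by simp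
  have FV: "\<forall>y\<le>height s. ivl_lo s y \<le> V" using assms(1,4) by auto
  have m: "snd (pop_merge (ivl_lo s) (ivl_hi s) (height s) (first_pos s (prev s))) \<le> V"
    by (rule pop_merge_snd_le[OF FV fV])
  have kV': "\<And>x. x \<le> k \<Longrightarrow> x \<le> V" using kV by simp
  show ?thesis using assms kV m unfolding push_cover_def Let_def by (auto split: if_splits simp: kV')
qed

lemma online_step_program:
  assumes "u < k" "height s \<le> k" "prev s \<le> k" "state_bounded k V s" "bounded_by V tv" "22+6*k \<le> S" "22+6*k \<le> V" "Suc (pos s) \<le> V"
    "amb_flag s = 0 \<Longrightarrow> height (push_cover (s\<lparr>pos := Suc (pos s)\<rparr>) u) \<le> k"
  shows "wp Pstep S V 0 (mem_image k s u tv) (\<lambda>t m. m = encode_state k (online_step s u) \<and> t \<le> 150 + 23 * (height s + 1 - height (online_step s u)))"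
proof (cases "amb_flag s = 0")
  case False
  then show ?thesis using assms unfolding online_step_def
    apply -
    apply ((((rule conjI impI)+)?, rule wp_unfold, simp) | (auto; fail))+
    done
next
  case True
  define s1 where "s1 = s\<lparr>pos := Suc (pos s)\<rparr>"
  define p where "p = prev s"
  define f where "f = first_pos s p"
  define B where "B = 150 + 23 * (height s + 1 - height (online_step s u))"
  have ab: "online_step s u = check_char (push_cover s1 u) u" unfolding online_step_def s1_def using True by simp
  have e1: "state_bounded k V s1" unfolding s1_def using assms(4,8) by simp
  have hd: "height (push_cover s1 u) \<le> k" using assms(9) True unfolding s1_def by simp
  have ed: "state_bounded k V (push_cover s1 u)"
    by (rule state_bounded_push_cover[OF e1]) (use assms hd in \<open>auto simp: s1_def\<close>)
  have fV: "f \<le> V" unfolding f_def p_def using assms(3,4) by simp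
  have BB: "B = 150 + 23 * (height s + 1 - height (push_cover s1 u))"
    unfolding B_def ab by (simp add: check_char_def record_char_def)
  define R where "R = (\<lambda>t pc m'. (pc = (70::nat) \<longrightarrow> t \<le> (30::nat) \<and> check_char_mem k V (push_cover s1 u) u m') \<and>
     (pc = 26 \<longrightarrow> t \<le> 30 \<and> pos s1 - 1 \<noteq> 0 \<and> \<not> pos s1 - 1 \<le> f \<and> first_succ s1 p \<noteq> u \<and> loop_mem k V s1 u f (pos s) m'))"
  show ?thesis unfolding B_def[symmetric]
  proof (rule wp_to_wp[where stops="{26,70}" and R=R])
    show "wp_to Pstep S V {26, 70} 0 (mem_image k s u tv) R"
      unfolding R_def s1_def f_def p_def using assms True fV[unfolded f_def p_def]
      apply -
      apply ((((rule conjI impI)+)?, rule wp_to_unfold, simp) |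
         (auto simp: push_cover_def Let_def intro!: check_char_mem_intro loop_mem_intro; fail))+
      done
  next
    fix t pc' :: nat and m' :: "nat \<Rightarrow> nat"
    assume pc': "pc' \<in> {26, 70}" and R: "R t pc' m'"
    show "wp Pstep S V pc' m' (\<lambda>t' m. m = encode_state k (online_step s u) \<and> t + t' \<le> B)"
    proof (cases "pc' = 70")
      case True
      then have R1: "t \<le> 30" "check_char_mem k V (push_cover s1 u) u m'" using R unfolding R_def by auto
      have "wp Pstep S V 70 m' (\<lambda>t2 m. m = encode_state k (check_char (push_cover s1 u) u) \<and> t2 + t \<le> B)"
        by (rule check_char_block_mem[OF assms(1) hd ed R1(2) assms(6,7)]) (use R1(1) in \<open>simp add: B_def\<close>)
      then show ?thesis unfolding True ab by (rule wp_mono) auto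
    next
      case False
      then have p26: "pc' = 26" using pc' by auto
      then have R1: "t \<le> 30" "pos s1 - 1 \<noteq> 0" "\<not> pos s1 - 1 \<le> f" "first_succ s1 p \<noteq> u" "loop_mem k V s1 u f (pos s) m'"
        using R unfolding R_def by auto
      define h' where "h' = fst (pop_merge (ivl_lo s1) (ivl_hi s1) (height s1) f)"
      define f' where "f' = snd (pop_merge (ivl_lo s1) (ivl_hi s1) (height s1) f)"
      have dv: "push_cover s1 u = s1\<lparr>height := Suc h', ivl_lo := (ivl_lo s1)(Suc h' := f'), ivl_hi := (ivl_hi s1)(Suc h' := pos s)\<rparr>"
        using R1(2,3,4) unfolding push_cover_def h'_def f'_def f_def p_def Let_def s1_def by simp
      have hk: "Suc h' \<le> k" using hd dv by simp
      have hle: "h' \<le> height s" unfolding h'_def s1_def using pop_merge_fst_le by simp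
      have f'V: "f' \<le> V" unfolding f'_def
        by (rule pop_merge_snd_le) (use assms(4) assms(2) fV in \<open>auto simp: s1_def\<close>)
      have BB2: "B = 150 + 23 * (height s - h')" using BB dv by simp
      have "wp Pstep S V 26 m' (\<lambda>t' m. m = encode_state k (online_step s u) \<and> t' + t \<le> B)"
      proof (rule pop_merge_loop[where s=s1 and f=f and c="pos s" and u=u, OF _ e1 R1(5) assms(1,6,7)])
        show "height s1 \<le> k" using assms(2) by (simp add: s1_def)
        fix m'' assume L: "loop_mem k V (s1\<lparr>height := fst (pop_merge (ivl_lo s1) (ivl_hi s1) (height s1) f)\<rparr>) u (snd (pop_merge (ivl_lo s1) (ivl_hi s1) (height s1) f)) (pos s) m''"
        have "wp Pstep S V 51 m'' (\<lambda>t2 m. m = encode_state k (check_char (push_cover s1 u) u) \<and> t2 + (23 * (height s1 - h') + 14 + t) \<le> B)"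
          by (rule push_block[OF assms(1) hk e1 L[folded h'_def f'_def] f'V _ assms(6,7) _ dv])
             (use assms(4) R1(1) BB2 in \<open>auto simp: s1_def\<close>)
        then show "wp Pstep S V 51 m'' (\<lambda>ta m. m = encode_state k (online_step s u) \<and> ta + 23 * (height s1 - fst (pop_merge (ivl_lo s1) (ivl_hi s1) (height s1) f)) + 14 + t \<le> B)"
          unfolding ab h'_def by (rule wp_mono) auto
      qed
      then show ?thesis unfolding p26 by (rule wp_mono) auto
    qed
  qed
qed
end

section \<open>Streaming\<close>

lemma state_bounded_of_range: "state_range k s \<Longrightarrow> pos s \<le> V \<Longrightarrow> k \<le> V \<Longrightarrow> 1 \<le> V \<Longrightarrow> state_bounded k V s"
  unfolding state_range_def state_bounded_def by (auto intro: order.trans)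

lemma encode_state_input: "(encode_state k s)(0 := u) = mem_image k s u (\<lambda>_. 0)"
  by (rule ext) (simp add: mem_image_def encode_state_def)

lemma run_Pstep:
  assumes I: "stream_inv k v s" and u: "u < k" and sv: "set v \<subseteq> {..<k}" and S: "22 + 6*k \<le> S" and V: "Suc (length v) + 22 + 6*k \<le> V"
  shows "\<exists>t. run Pstep S V ((encode_state k s)(0 := u)) = Some (t, encode_state k (online_step s u)) \<and>
           t \<le> 150 + 23 * (height s + 1 - height (online_step s u))"
proof -
  have B: "state_range k s" and J: "pos s \<le> length v" using I unfolding stream_inv_def by auto
  have e: "state_bounded k V s" by (rule state_bounded_of_range[OF B]) (use J V in auto)
  have w: "wp Pstep S V 0 (mem_image k s u (\<lambda>_. 0)) (\<lambda>t m. m = encode_state k (online_step s u) \<and> t \<le> 150 + 23 * (height s + 1 - height (online_step s u)))"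
  proof (rule online_step_program[OF u])
    show "height s \<le> k" "prev s \<le> k" using B unfolding state_range_def by auto
    show "state_bounded k V s" by (rule e)
    show "bounded_by V (\<lambda>_. 0)" unfolding bounded_by_def by simp
    show "22 + 6 * k \<le> S" by (rule S)
    show "22 + 6 * k \<le> V" using V by simp
    show "Suc (pos s) \<le> V" using J V by simp
    show "amb_flag s = 0 \<Longrightarrow> height (push_cover (s\<lparr>pos := Suc (pos s)\<rparr>) u) \<le> k" using stream_inv_online_step[OF I u sv] by simp
  qed
  show ?thesis using run_wp[OF w] unfolding encode_state_input by auto
qed

text \<open>Amortisation: a letter costs at most 150 steps plus 23 per popped interval and pushes at most
  one interval, so \<open>23 * height\<close> serves as a potential.\<close>

lemma stream_Pstep:
  assumes "stream_inv k v s" and "set (v @ w) \<subseteq> {..<k}" and "length (v @ w) + 22 + 6 * k \<le> V"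
    and "22 + 6 * k \<le> S"
  shows "\<exists>t s'. stream Pstep S V (encode_state k s) w = Some (t, encode_state k s') \<and> stream_inv k (v @ w) s'
           \<and> length w \<le> t \<and> t + 23 * height s' \<le> 174 * length w + 23 * height s"
  using assms
proof (induction w arbitrary: v s)
  case Nil
  then show ?case by (intro exI[of _ 0] exI[of _ s]) simp
next
  case (Cons u w)
  note I = Cons.prems(1) and S = Cons.prems(4)
  have u: "u < k" and sv: "set v \<subseteq> {..<k}" using Cons.prems(2) by auto
  have V: "Suc (length v) + 22 + 6 * k \<le> V" using Cons.prems(3) by simp
  obtain t1 where r: "run Pstep S V ((encode_state k s)(0 := u)) = Some (t1, encode_state k (online_step s u))"
    and t1: "t1 \<le> 150 + 23 * (height s + 1 - height (online_step s u))"
    using run_Pstep[OF I u sv S V] by auto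
  have I1: "stream_inv k (v @ [u]) (online_step s u)" using stream_inv_online_step[OF I u sv] by simp
  have "set ((v @ [u]) @ w) \<subseteq> {..<k}" "length ((v @ [u]) @ w) + 22 + 6 * k \<le> V"
    using Cons.prems(2,3) by auto
  then obtain t2 s' where r2: "stream Pstep S V (encode_state k (online_step s u)) w = Some (t2, encode_state k s')"
    and I2: "stream_inv k ((v @ [u]) @ w) s'" and l2: "length w \<le> t2"
    and t2: "t2 + 23 * height s' \<le> 174 * length w + 23 * height (online_step s u)"
    using Cons.IH[OF I1 _ _ S] by blast
  have "stream Pstep S V (encode_state k s) (u # w) = Some (Suc t1 + t2, encode_state k s')"
    using r r2 by simp
  moreover have "Suc t1 + t2 + 23 * height s' \<le> 174 * length (u # w) + 23 * height s"
    using t1 t2 height_online_step[of s u] by simp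
  ultimately show ?case using I2 l2 by (intro exI[of _ "Suc t1 + t2"] exI[of _ s']) auto
qed

lemma run_Pfin:
  assumes "state_bounded k V s" "22 \<le> S" "1 \<le> V"
  shows "\<exists>t m. run Pfin S V (encode_state k s) = Some (t, m) \<and> t \<le> 3 \<and> (m 0 \<noteq> 0 \<longleftrightarrow> amb_flag s = 0)"
proof -
  have b: "bounded_by V (encode_state k s)" using assms(1) by simp
  have a2: "encode_state k s 2 = amb_flag s" by (simp add: encode_state_def)
  have "wp Pfin S V 0 (encode_state k s) (\<lambda>t m. t \<le> 3 \<and> (m 0 \<noteq> 0 \<longleftrightarrow> amb_flag s = 0))"
    using b assms a2
    apply -
    apply ((((rule conjI impI)+)?, rule wp_unfold, simp add: Pfin_def) | (auto; fail))+
    done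
  then show ?thesis using run_wp by blast
qed

lemma encode_init_state: "encode_state k init_state = (\<lambda>_. 0)(1 := k)"
  by (rule ext) (simp add: encode_state_def init_state_def layout_field_def)

theorem stream_alg_correct:
  assumes sw: "set w \<subseteq> {..<k}" and S: "22 + 6 * k \<le> S" and V: "length w + 22 + 6 * k \<le> V"
  shows "\<exists>t m. stream_alg Pstep Pfin S V k w = Some (t, m) \<and> length w \<le> t \<and> t \<le> 174 * length w + 3
           \<and> (m 0 \<noteq> 0 \<longleftrightarrow> uniq_dec {..<k} w)"
proof -
  obtain t s' where st: "stream Pstep S V (encode_state k init_state) w = Some (t, encode_state k s')"
    and I: "stream_inv k w s'" and lt: "length w \<le> t" and tt: "t \<le> 174 * length w"
    using sw V S stream_Pstep[where k = k and w = w and V = V and S = S, OF stream_inv_init] by (auto simp: init_state_def)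
  have "state_bounded k V s'"
    by (rule state_bounded_of_range) (use I V in \<open>auto simp: stream_inv_def\<close>)
  then obtain t2 m where r: "run Pfin S V (encode_state k s') = Some (t2, m)" and t2: "t2 \<le> 3"
    and m: "m 0 \<noteq> 0 \<longleftrightarrow> amb_flag s' = 0"
    using run_Pfin[of k V s' S] S V by auto
  have "stream_alg Pstep Pfin S V k w = Some (t + t2, m)"
    unfolding stream_alg_def using st r encode_init_state by simp
  moreover have "amb_flag s' = 0 \<longleftrightarrow> uniq_dec {..<k} w"
    using I uniq_dec_iff_not_ambiguous[OF sw] unfolding stream_inv_def by auto
  ultimately show ?thesis using lt tt t2 m by auto
qed

lemma mul_le_power: "(2::nat) \<le> x \<Longrightarrow> 16 * x \<le> x ^ 200"
proof -
  assume x: "2 \<le> x"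
  have "(16::nat) \<le> 2 ^ 199" by simp
  also have "\<dots> \<le> x ^ 199" by (rule power_mono[OF x]) simp
  finally have "16 * x \<le> x ^ 199 * x" by simp
  then show ?thesis by (simp add: power_Suc2[symmetric])
qed

theorem mainTheorem2:
  "\<exists>(Pstep :: instr list) (Pfin :: instr list) (c :: nat).
     \<forall>(k :: nat) (w :: nat list). set w \<subseteq> {..<k} \<longrightarrow>
       (\<exists>t m. stream_alg Pstep Pfin (c * (k + 1)) ((length w + k + 2) ^ c) k w = Some (t, m)
          \<and> length w \<le> t \<and> t \<le> c * (length w + 1)
          \<and> (m 0 \<noteq> 0 \<longleftrightarrow> uniq_dec {..<k} w))"
proof (rule exI[of _ Pstep], rule exI[of _ Pfin], rule exI[of _ 200], intro allI impI)
  fix k :: nat and w :: "nat list"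
  assume sw: "set w \<subseteq> {..<k}"
  have "22 + 6 * k \<le> 200 * (k + 1)" by simp
  moreover have "length w + 22 + 6 * k \<le> (length w + k + 2) ^ 200"
    using mul_le_power[of "length w + k + 2"] by simp
  ultimately obtain t m where "stream_alg Pstep Pfin (200 * (k + 1)) ((length w + k + 2) ^ 200) k w = Some (t, m)"
    "length w \<le> t" "t \<le> 174 * length w + 3" "m 0 \<noteq> 0 \<longleftrightarrow> uniq_dec {..<k} w"
    using stream_alg_correct[OF sw] by blast
  then show "\<exists>t m. stream_alg Pstep Pfin (200 * (k + 1)) ((length w + k + 2) ^ 200) k w = Some (t, m)
          \<and> length w \<le> t \<and> t \<le> 200 * (length w + 1) \<and> (m 0 \<noteq> 0 \<longleftrightarrow> uniq_dec {..<k} w)"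
    by (intro exI[of _ t] exI[of _ m]) auto
qed

end
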